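(* Consider an MDP with transition density $q$, target policy $\pi$, discount factor $0\le\gamma<1$, and batch data from $N$ i.i.d. trajectories generated by a stationary behavior policy $\pi^b$. Assume the Markov property with transition density $q$, that there are positive constants $p_{\min},p_{1,\max},p_{2,\max}$ with $p_{\min}\le\bar d^{\pi^b}_T\le p_{1,\max}$, $\pi$ absolutely continuous with respect to $\pi^b$, and $q(s'\mid s,a)\pi(a'\mid s')\le p_{2,\max}$, and that $\{(S_t,A_t)\}_{t\ge0}$ under $\pi^b$ is strictly stationary with stationary density $d^{\pi^b}$ and exponentially $\beta$-mixing. Let $p_{\max}=\max(p_{1,\max},p_{2,\max})$. Then for every $J\ge1$, $$e_J\gtrsim\frac{p_{\min}^2}{p_{\max}}(1-\gamma)^2\omega_J,$$ where $\omega_J=\lambda_{\min}\big(\mathbb E[\psi^J(S,A)\psi^J(S,A)^\top]\big)$.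
   Context: $\bar d^{\pi^b}_T$ is the average over $0\le t<T$ of the marginal densities of $(S_t,A_t)$ under $\pi^b$. $\psi^J=(\psi_{J1},\dots,\psi_{JJ})^\top$ is a vector of sieve basis functions in $L^2$ on $\mathcal S\times\mathcal A$; $\psi^J_\pi(s)=\int\pi(a\mid s)\psi^J(s,a)da$; $\kappa^J_\pi(s,a,s')=\psi^J(s,a)-\gamma\psi^J_\pi(s')$. $\mathbb E$ is with $(S,A)\sim d^{\pi^b}$ and $S'\mid(S,A)\sim q$. $e_J=\lambda_{\min}\big(\mathbb E[\kappa^J_\pi(S,A,S')\kappa^J_\pi(S,A,S')^\top]\big)$. Exponential $\beta$-mixing means $\beta_k\le\beta_0e^{-\beta_1k}$ with $\beta_0\ge0$, $\beta_1>0$. $a\gtrsim b$ means $a\ge cb$ for a positive constant $c$. *)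

theory Defs
  imports "HOL-Analysis.Analysis" "Jordan_Normal_Form.Char_Poly"
begin

definition SAM :: "'s measure \<Rightarrow> 'a measure \<Rightarrow> ('s \<times> 'a) measure" where
  "SAM Sm Am = Sm \<Otimes>\<^sub>M Am"

text \<open>Marginal density of (S_t, A_t) under the behaviour policy pb, initial state
  density nu0 and transition density q (q s a s' = q(s' | s, a)), pb s a = pb(a | s).\<close>
fun marg :: "'s measure \<Rightarrow> 'a measure \<Rightarrow> ('s \<Rightarrow> real) \<Rightarrow> ('s \<Rightarrow> 'a \<Rightarrow> 's \<Rightarrow> real)
    \<Rightarrow> ('s \<Rightarrow> 'a \<Rightarrow> real) \<Rightarrow> nat \<Rightarrow> 's \<times> 'a \<Rightarrow> real" where
  "marg Sm Am nu0 q pb 0 = (\<lambda>(s, a). nu0 s * pb s a)"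
| "marg Sm Am nu0 q pb (Suc t) =
     (\<lambda>(s', a'). (\<integral>x. marg Sm Am nu0 q pb t x * q (fst x) (snd x) s' \<partial>SAM Sm Am) * pb s' a')"

definition dbar :: "'s measure \<Rightarrow> 'a measure \<Rightarrow> ('s \<Rightarrow> real) \<Rightarrow> ('s \<Rightarrow> 'a \<Rightarrow> 's \<Rightarrow> real)
    \<Rightarrow> ('s \<Rightarrow> 'a \<Rightarrow> real) \<Rightarrow> nat \<Rightarrow> 's \<times> 'a \<Rightarrow> real" where
  "dbar Sm Am nu0 q pb T = (\<lambda>x. (\<Sum>t<T. marg Sm Am nu0 q pb t x) / real T)"

text \<open>(k+1)-step transition density of the state-action chain under pb.\<close>
fun kdens :: "'s measure \<Rightarrow> 'a measure \<Rightarrow> ('s \<Rightarrow> 'a \<Rightarrow> 's \<Rightarrow> real)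
    \<Rightarrow> ('s \<Rightarrow> 'a \<Rightarrow> real) \<Rightarrow> nat \<Rightarrow> 's \<times> 'a \<Rightarrow> 's \<times> 'a \<Rightarrow> real" where
  "kdens Sm Am q pb 0 = (\<lambda>x y. q (fst x) (snd x) (fst y) * pb (fst y) (snd y))"
| "kdens Sm Am q pb (Suc k) =
     (\<lambda>x y. \<integral>z. kdens Sm Am q pb k x z * q (fst z) (snd z) (fst y) * pb (fst y) (snd y) \<partial>SAM Sm Am)"

text \<open>beta-mixing coefficient of the strictly stationary Markov chain (S_t,A_t) with
  stationary density d:  beta_k = E_d [ || P^k((S,A), .) - d ||_TV ]  (k >= 1).\<close>
definition beta_coeff :: "'s measure \<Rightarrow> 'a measure \<Rightarrow> ('s \<Rightarrow> 'a \<Rightarrow> 's \<Rightarrow> real)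
    \<Rightarrow> ('s \<Rightarrow> 'a \<Rightarrow> real) \<Rightarrow> ('s \<times> 'a \<Rightarrow> real) \<Rightarrow> nat \<Rightarrow> real" where
  "beta_coeff Sm Am q pb d k =
     (\<integral>x. d x * ((1/2) * (\<integral>y. \<bar>kdens Sm Am q pb (k - 1) x y - d y\<bar> \<partial>SAM Sm Am)) \<partial>SAM Sm Am)"

definition exp_beta_mixing :: "'s measure \<Rightarrow> 'a measure \<Rightarrow> ('s \<Rightarrow> 'a \<Rightarrow> 's \<Rightarrow> real)
    \<Rightarrow> ('s \<Rightarrow> 'a \<Rightarrow> real) \<Rightarrow> ('s \<times> 'a \<Rightarrow> real) \<Rightarrow> bool" where
  "exp_beta_mixing Sm Am q pb d \<longleftrightarrow>
     (\<exists>b0 b1. b0 \<ge> 0 \<and> b1 > 0 \<and>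
        (\<forall>k\<ge>1. beta_coeff Sm Am q pb d k \<le> b0 * exp (- b1 * real k)))"

definition Exp3 :: "'s measure \<Rightarrow> 'a measure \<Rightarrow> ('s \<Rightarrow> 'a \<Rightarrow> 's \<Rightarrow> real)
    \<Rightarrow> ('s \<times> 'a \<Rightarrow> real) \<Rightarrow> ('s \<times> 'a \<Rightarrow> 's \<Rightarrow> real) \<Rightarrow> real" where
  "Exp3 Sm Am q d g =
     (\<integral>x. d x * (\<integral>s'. q (fst x) (snd x) s' * g x s' \<partial>Sm) \<partial>SAM Sm Am)"

definition psi_pi :: "'a measure \<Rightarrow> ('s \<Rightarrow> 'a \<Rightarrow> real) \<Rightarrow> (nat \<Rightarrow> 's \<times> 'a \<Rightarrow> real)
    \<Rightarrow> nat \<Rightarrow> 's \<Rightarrow> real" where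
  "psi_pi Am pol psi j s = (\<integral>a. pol s a * psi j (s, a) \<partial>Am)"

definition kappa :: "'a measure \<Rightarrow> ('s \<Rightarrow> 'a \<Rightarrow> real) \<Rightarrow> real \<Rightarrow> (nat \<Rightarrow> 's \<times> 'a \<Rightarrow> real)
    \<Rightarrow> nat \<Rightarrow> 's \<times> 'a \<Rightarrow> 's \<Rightarrow> real" where
  "kappa Am pol \<gamma> psi j x s' = psi j x - \<gamma> * psi_pi Am pol psi j s'"

definition lambda_min :: "real mat \<Rightarrow> real" where
  "lambda_min A = Min {k. eigenvalue A k}"

definition e_J :: "'s measure \<Rightarrow> 'a measure \<Rightarrow> ('s \<Rightarrow> 'a \<Rightarrow> 's \<Rightarrow> real) \<Rightarrow> ('s \<times> 'a \<Rightarrow> real)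
    \<Rightarrow> ('s \<Rightarrow> 'a \<Rightarrow> real) \<Rightarrow> real \<Rightarrow> nat \<Rightarrow> (nat \<Rightarrow> 's \<times> 'a \<Rightarrow> real) \<Rightarrow> real" where
  "e_J Sm Am q d pol \<gamma> J psi = lambda_min (mat J J (\<lambda>(i, j).
      Exp3 Sm Am q d (\<lambda>x s'. kappa Am pol \<gamma> psi i x s' * kappa Am pol \<gamma> psi j x s')))"

definition omega_J :: "'s measure \<Rightarrow> 'a measure \<Rightarrow> ('s \<times> 'a \<Rightarrow> real)
    \<Rightarrow> nat \<Rightarrow> (nat \<Rightarrow> 's \<times> 'a \<Rightarrow> real) \<Rightarrow> real" where
  "omega_J Sm Am d J psi = lambda_min (mat J J (\<lambda>(i, j).
      \<integral>x. d x * psi i x * psi j x \<partial>SAM Sm Am))"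

end

theory Submission
  imports Defs "Jordan_Normal_Form.Spectral_Radius"
begin

(*
  Write f = sum_j v_j psi_j, let H average a function of (s,a) over the target policy and
  let P h (s,a) = E[H h (S') | s,a] be the transition operator of pi.  The quadratic form of
  the e_J matrix at v is E_d E_q (f(S,A) - gamma H f(S'))^2, which by Jensen dominates
  E_d g^2 for the residual g = f - gamma P f.  Because q pi <= p2max, P maps L^2 into bounded
  functions with |P h|^2 <= p2max ||h||^2, and P is a contraction in the sup norm.  Hence
  P f = P g + gamma P (P f) gives (1 - gamma) sup |P f| <= sqrt (p2max ||g||^2), and
  f = g + gamma P f together with pmin <= d <= p1max yields
      pmin (1 - gamma)^2 E_d f^2 <= 2 (pmin + p2max) E_d g^2.
  Both matrices are symmetric, so their smallest eigenvalues are minima of Rayleigh quotients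
  and the inequality of quadratic forms passes to them.  Finally pmin mu(S x A) <= 1 converts
  the constant into the stated one (with c depending only on the reference measures).
  Stationarity enters only through d = dbar.
*)

section \<open>Quadratic forms and the smallest eigenvalue\<close>

definition quad_form :: "nat \<Rightarrow> (nat \<Rightarrow> nat \<Rightarrow> real) \<Rightarrow> (nat \<Rightarrow> real) \<Rightarrow> real" where
  "quad_form J E v = (\<Sum>i<J. \<Sum>j<J. v i * v j * E i j)"

definition sq_norm :: "nat \<Rightarrow> (nat \<Rightarrow> real) \<Rightarrow> real" where
  "sq_norm J v = (\<Sum>i<J. (v i)\<^sup>2)"

lemma quad_form_scale: "quad_form J E (\<lambda>i. c * v i) = c\<^sup>2 * quad_form J E v"
  unfolding quad_form_def by (simp add: sum_distrib_left power2_eq_square algebra_simps)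

lemma quad_form_cmult: "quad_form J (\<lambda>i j. c * E i j) v = c * quad_form J E v"
  unfolding quad_form_def by (simp add: sum_distrib_left algebra_simps)

lemma quad_form_rank_one: "quad_form J (\<lambda>i j. u i * u j) v = (\<Sum>i<J. v i * u i)\<^sup>2"
  unfolding quad_form_def power2_eq_square sum_product by (simp add: algebra_simps)

lemma sq_norm_scale: "sq_norm J (\<lambda>i. c * v i) = c\<^sup>2 * sq_norm J v"
  unfolding sq_norm_def by (simp add: sum_distrib_left power_mult_distrib)

lemma sq_norm_nonneg: "0 \<le> sq_norm J v"
  unfolding sq_norm_def by (simp add: sum_nonneg)

lemma sq_norm_pos_iff: "0 < sq_norm J v \<longleftrightarrow> (\<exists>i<J. v i \<noteq> 0)"
  unfolding sq_norm_def by (auto simp: order_less_le sum_nonneg sum_nonneg_eq_0_iff)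

lemma quad_form_add:
  assumes sym: "\<forall>i<J. \<forall>j<J. E i j = E j i"
  shows "quad_form J E (\<lambda>i. a i + t * b i)
    = quad_form J E a + 2 * t * (\<Sum>i<J. b i * (\<Sum>j<J. E i j * a j)) + t\<^sup>2 * quad_form J E b"
proof -
  have "quad_form J E (\<lambda>i. a i + t * b i) = quad_form J E a
      + t * ((\<Sum>i<J. \<Sum>j<J. a i * b j * E i j) + (\<Sum>i<J. \<Sum>j<J. b i * a j * E i j))
      + t\<^sup>2 * quad_form J E b"
    unfolding quad_form_def by (simp add: algebra_simps power2_eq_square sum.distrib sum_distrib_left)
  moreover have "(\<Sum>i<J. \<Sum>j<J. a i * b j * E i j) = (\<Sum>i<J. \<Sum>j<J. b i * a j * E i j)"
    using sym by (subst sum.swap) (auto intro!: sum.cong simp: algebra_simps)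
  moreover have "(\<Sum>i<J. \<Sum>j<J. b i * a j * E i j) = (\<Sum>i<J. b i * (\<Sum>j<J. E i j * a j))"
    by (simp add: sum_distrib_left algebra_simps)
  ultimately show ?thesis
    by simp
qed

lemma sq_norm_add:
  "sq_norm J (\<lambda>i. a i + t * b i) = sq_norm J a + 2 * t * (\<Sum>i<J. b i * a i) + t\<^sup>2 * sq_norm J b"
  unfolding sq_norm_def by (simp add: algebra_simps power2_eq_square sum.distrib sum_distrib_left)

lemma quad_form_mat:
  assumes "v \<in> carrier_vec J"
  shows "scalar_prod v (mat J J (\<lambda>(i, j). E i j) *\<^sub>v v) = quad_form J E (vec_index v)"
  using assms
  by (auto simp: quad_form_def scalar_prod_def mult_mat_vec_def row_def sum_distrib_left
      atLeast0LessThan intro!: sum.cong)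

lemma compactin_unit_sphere:
  "compactin (product_topology (\<lambda>_. euclideanreal) {..<J})
     {v \<in> {..<J} \<rightarrow>\<^sub>E UNIV. sq_norm J v = 1}"
proof (rule closed_compactin)
  let ?X = "product_topology (\<lambda>_. euclideanreal) {..<J}"
  show "compactin ?X (PiE {..<J} (\<lambda>_. {-1..1}))"
    by (subst compactin_PiE) auto
  show "{v \<in> {..<J} \<rightarrow>\<^sub>E UNIV. sq_norm J v = 1} \<subseteq> PiE {..<J} (\<lambda>_. {-1..1})"
  proof
    fix v assume v: "v \<in> {v \<in> {..<J} \<rightarrow>\<^sub>E UNIV. sq_norm J v = 1}"
    have "(v i)\<^sup>2 \<le> 1" if "i < J" for i
      using v that member_le_sum[of i "{..<J}" "\<lambda>i. (v i)\<^sup>2"] by (simp add: sq_norm_def)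
    then show "v \<in> PiE {..<J} (\<lambda>_. {-1..1})"
      using v by (auto simp: PiE_iff abs_square_le_1 abs_le_iff)
  qed
  have "continuous_map ?X euclideanreal (sq_norm J)"
    unfolding sq_norm_def by (intro continuous_map_sum continuous_intros) auto
  then have "closedin ?X {v \<in> topspace ?X. sq_norm J v \<in> {1}}"
    by (rule closedin_continuous_map_preimage) auto
  then show "closedin ?X {v \<in> {..<J} \<rightarrow>\<^sub>E UNIV. sq_norm J v = 1}"
    by simp
qed

lemma quad_form_restrict: "quad_form J E (restrict v {..<J}) = quad_form J E v"
  and sq_norm_restrict: "sq_norm J (restrict v {..<J}) = sq_norm J v"
  unfolding quad_form_def sq_norm_def by (auto intro!: sum.cong)

lemma quad_form_min_on_unit_sphere:
  assumes "J \<ge> 1"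
  obtains w0 where "w0 \<in> {v \<in> {..<J} \<rightarrow>\<^sub>E UNIV. sq_norm J v = 1}"
    and "\<And>w. w \<in> {v \<in> {..<J} \<rightarrow>\<^sub>E UNIV. sq_norm J v = 1} \<Longrightarrow> quad_form J E w0 \<le> quad_form J E w"
proof -
  let ?S = "{v \<in> {..<J} \<rightarrow>\<^sub>E UNIV. sq_norm J v = 1}"
  have "continuous_map (product_topology (\<lambda>_. euclideanreal) {..<J}) euclideanreal (quad_form J E)"
    unfolding quad_form_def by (intro continuous_map_sum continuous_intros) auto
  then have "compactin euclideanreal (quad_form J E ` ?S)"
    by (rule image_compactin[OF compactin_unit_sphere])
  then have comp: "compact (quad_form J E ` ?S)" by simp
  have "sq_norm J (\<lambda>i. if i = 0 then 1 else 0) = (\<Sum>i<J. if i = 0 then 1 else 0)"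
    unfolding sq_norm_def by (intro sum.cong) auto
  then have "restrict (\<lambda>i. if i = 0 then 1 else 0) {..<J} \<in> ?S"
    using assms by (simp add: sq_norm_restrict)
  then have "quad_form J E ` ?S \<noteq> {}" by blast
  with compact_attains_inf[OF comp] that show thesis by auto
qed

lemma rayleigh_minimizer_exists:
  assumes "J \<ge> 1"
  obtains w0 where "sq_norm J w0 = 1" and "\<And>w. quad_form J E w0 * sq_norm J w \<le> quad_form J E w"
proof -
  let ?S = "{v \<in> {..<J} \<rightarrow>\<^sub>E UNIV. sq_norm J v = 1}"
  obtain w0 where w0: "w0 \<in> ?S" and min: "\<And>w. w \<in> ?S \<Longrightarrow> quad_form J E w0 \<le> quad_form J E w"
    using quad_form_min_on_unit_sphere[OF assms] by blast
  have "quad_form J E w0 * sq_norm J w \<le> quad_form J E w" for w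
  proof (cases "sq_norm J w = 0")
    case True
    then have "\<forall>i<J. w i = 0" using sq_norm_pos_iff[of J w] by auto
    then show ?thesis using True by (simp add: quad_form_def)
  next
    case False
    then have pos: "0 < sq_norm J w" using sq_norm_nonneg[of J w] by simp
    define c where "c = 1 / sqrt (sq_norm J w)"
    have "sq_norm J (\<lambda>i. c * w i) = c\<^sup>2 * sq_norm J w" by (rule sq_norm_scale)
    also have "\<dots> = 1" using pos by (simp add: c_def power_divide)
    finally have "restrict (\<lambda>i. c * w i) {..<J} \<in> ?S" by (simp add: sq_norm_restrict)
    then have "quad_form J E w0 \<le> c\<^sup>2 * quad_form J E w"
      using min[of "restrict (\<lambda>i. c * w i) {..<J}"] by (simp add: quad_form_restrict quad_form_scale)
    then show ?thesis using pos by (simp add: c_def power_divide pos_le_divide_eq)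
  qed
  with w0 that show thesis by blast
qed

lemma exists_linear_plus_quadratic_neg:
  fixes N C :: real
  assumes "0 < N"
  shows "\<exists>t. 2 * t * N + t\<^sup>2 * C < 0"
proof
  define t where "t = - N / (\<bar>C\<bar> + 1)"
  have "t < 0" and "- N \<le> t * \<bar>C\<bar>"
    using assms by (auto simp: t_def field_simps)
  then have "t * (2 * N + t * \<bar>C\<bar>) < 0"
    using assms by (intro mult_neg_pos) auto
  moreover have "t\<^sup>2 * C \<le> t\<^sup>2 * \<bar>C\<bar>" by (simp add: mult_left_mono)
  ultimately show "2 * t * N + t\<^sup>2 * C < 0" by (simp add: power2_eq_square algebra_simps)
qed

lemma rayleigh_minimizer_eigen:
  assumes sym: "\<forall>i<J. \<forall>j<J. E i j = E j i"
    and w0: "sq_norm J w0 = 1" and min: "\<And>w. quad_form J E w0 * sq_norm J w \<le> quad_form J E w"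
  shows "\<forall>i<J. (\<Sum>j<J. E i j * w0 j) = quad_form J E w0 * w0 i"
proof (rule ccontr)
  let ?mu = "quad_form J E w0"
  define r where "r i = (\<Sum>j<J. E i j * w0 j) - ?mu * w0 i" for i
  assume "\<not> ?thesis"
  then have N: "0 < sq_norm J r" unfolding r_def sq_norm_pos_iff by auto
  have residual: "(\<Sum>i<J. r i * (\<Sum>j<J. E i j * w0 j)) - ?mu * (\<Sum>i<J. r i * w0 i) = sq_norm J r"
    unfolding sq_norm_def
    by (simp add: r_def sum_subtractf sum_distrib_left power2_eq_square algebra_simps)
  \<comment> \<open>moving w0 along the residual r would decrease the Rayleigh quotient to first order\<close>
  have "0 \<le> 2 * t * sq_norm J r + t\<^sup>2 * (quad_form J E r - ?mu * sq_norm J r)" for t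
  proof -
    have "?mu * sq_norm J (\<lambda>i. w0 i + t * r i) \<le> quad_form J E (\<lambda>i. w0 i + t * r i)"
      by (rule min)
    then show ?thesis
      unfolding sq_norm_add quad_form_add[OF sym] w0 residual[symmetric]
      by (simp add: algebra_simps)
  qed
  with exists_linear_plus_quadratic_neg[OF N] show False by (meson not_le)
qed

lemma eigenvector_quad_form:
  assumes "eigenvector (mat J J (\<lambda>(i, j). E i j)) v lam"
  shows "0 < sq_norm J (vec_index v)"
    and "lam * sq_norm J (vec_index v) = quad_form J E (vec_index v)"
proof -
  let ?M = "mat J J (\<lambda>(i, j). E i j)"
  have v: "v \<in> carrier_vec J" "v \<noteq> 0\<^sub>v J" "?M *\<^sub>v v = lam \<cdot>\<^sub>v v"
    using assms unfolding eigenvector_def by auto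
  then show "0 < sq_norm J (vec_index v)"
    unfolding sq_norm_pos_iff by (auto simp: vec_eq_iff)
  have "scalar_prod v (?M *\<^sub>v v) = lam * sq_norm J (vec_index v)"
    unfolding v(3) using v(1)
    by (simp add: scalar_prod_def sq_norm_def atLeast0LessThan sum_distrib_left power2_eq_square
        algebra_simps)
  then show "lam * sq_norm J (vec_index v) = quad_form J E (vec_index v)"
    using quad_form_mat[OF v(1)] by simp
qed

lemma lambda_min_rayleigh:
  assumes J: "J \<ge> 1" and sym: "\<forall>i<J. \<forall>j<J. E i j = E j i"
  shows "eigenvalue (mat J J (\<lambda>(i, j). E i j)) (lambda_min (mat J J (\<lambda>(i, j). E i j)))"
    and "lambda_min (mat J J (\<lambda>(i, j). E i j)) * sq_norm J w \<le> quad_form J E w"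
proof -
  let ?M = "mat J J (\<lambda>(i, j). E i j)"
  obtain w0 where w0: "sq_norm J w0 = 1"
    and min: "\<And>w. quad_form J E w0 * sq_norm J w \<le> quad_form J E w"
    using rayleigh_minimizer_exists[OF J] by blast
  have "eigenvector ?M (vec J w0) (quad_form J E w0)"
    unfolding eigenvector_def
    using rayleigh_minimizer_eigen[OF sym w0 min] w0 sq_norm_pos_iff[of J w0]
    by (auto simp: vec_eq_iff mult_mat_vec_def scalar_prod_def row_def atLeast0LessThan)
  then have mu: "eigenvalue ?M (quad_form J E w0)"
    unfolding eigenvalue_def by blast
  have fin: "finite {k. eigenvalue ?M k}"
    using card_finite_spectrum(1)[of ?M J] by (simp add: spectrum_def)
  show "eigenvalue ?M (lambda_min ?M)"
    using Min_in[OF fin] mu unfolding lambda_min_def by auto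
  have "lambda_min ?M \<le> quad_form J E w0"
    using Min_le[OF fin] mu unfolding lambda_min_def by auto
  then have "lambda_min ?M * sq_norm J w \<le> quad_form J E w0 * sq_norm J w"
    by (intro mult_right_mono sq_norm_nonneg)
  also have "\<dots> \<le> quad_form J E w" by (rule min)
  finally show "lambda_min ?M * sq_norm J w \<le> quad_form J E w" .
qed

lemma lambda_min_nonneg:
  assumes "J \<ge> 1" and "\<forall>i<J. \<forall>j<J. E i j = E j i" and "\<And>v. 0 \<le> quad_form J E v"
  shows "0 \<le> lambda_min (mat J J (\<lambda>(i, j). E i j))"
proof -
  obtain v where "eigenvector (mat J J (\<lambda>(i, j). E i j)) v (lambda_min (mat J J (\<lambda>(i, j). E i j)))"
    using lambda_min_rayleigh(1)[OF assms(1,2)] unfolding eigenvalue_def by blast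
  from eigenvector_quad_form[OF this] assms(3) show ?thesis
    by (metis zero_le_mult_iff not_less)
qed

lemma lambda_min_scaled_mono:
  assumes J: "J \<ge> 1" and symA: "\<forall>i<J. \<forall>j<J. A i j = A j i" and symB: "\<forall>i<J. \<forall>j<J. B i j = B j i"
    and k: "0 \<le> k" and le: "\<And>v. k * quad_form J B v \<le> quad_form J A v"
  shows "k * lambda_min (mat J J (\<lambda>(i, j). B i j)) \<le> lambda_min (mat J J (\<lambda>(i, j). A i j))"
proof -
  let ?lA = "lambda_min (mat J J (\<lambda>(i, j). A i j))" and ?lB = "lambda_min (mat J J (\<lambda>(i, j). B i j))"
  obtain v where "eigenvector (mat J J (\<lambda>(i, j). A i j)) v ?lA"
    using lambda_min_rayleigh(1)[OF J symA] unfolding eigenvalue_def by blast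
  note v = eigenvector_quad_form[OF this]
  have "k * ?lB * sq_norm J (vec_index v) \<le> k * quad_form J B (vec_index v)"
    using lambda_min_rayleigh(2)[OF J symB] k by (simp add: mult.assoc mult_left_mono)
  also have "\<dots> \<le> ?lA * sq_norm J (vec_index v)" using le v(2) by simp
  finally show ?thesis using v(1) by simp
qed

section \<open>Averages against a probability density\<close>

definition prob_density :: "'b measure \<Rightarrow> ('b \<Rightarrow> real) \<Rightarrow> bool" where
  "prob_density N w \<longleftrightarrow> (\<forall>x\<in>space N. 0 \<le> w x) \<and> integrable N w \<and> (\<integral>x. w x \<partial>N) = 1"

lemma abs_mult_le_sum_squares: "\<bar>(a::real) * b\<bar> \<le> a\<^sup>2 + b\<^sup>2"
proof -
  have "2 * (\<bar>a\<bar> * \<bar>b\<bar>) \<le> a\<^sup>2 + b\<^sup>2"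
    using sum_squares_bound[of "\<bar>a\<bar>" "\<bar>b\<bar>"] by (simp add: mult.assoc)
  moreover have "0 \<le> \<bar>a\<bar> * \<bar>b\<bar>" by simp
  ultimately show ?thesis unfolding abs_mult by linarith
qed

lemma square_sum_le: "((a::real) + b)\<^sup>2 \<le> 2 * a\<^sup>2 + 2 * b\<^sup>2"
  using sum_squares_bound[of a b] by (simp add: power2_sum)

lemma integrable_density_mult:
  fixes w h :: "'b \<Rightarrow> real"
  assumes w0: "\<forall>x\<in>space N. 0 \<le> w x" and wi: "integrable N w" and hm: "h \<in> borel_measurable N"
    and fin: "(\<integral>\<^sup>+x. ennreal (w x * (h x)\<^sup>2) \<partial>N) < \<infinity>"
  shows "integrable N (\<lambda>x. w x * h x)"
proof -
  have "integrable N (\<lambda>x. w x * (h x)\<^sup>2)"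
    using wi hm w0 fin by (intro integrableI_nonneg) (auto intro!: AE_I2)
  then have "integrable N (\<lambda>x. w x + w x * (h x)\<^sup>2)" using wi by simp
  then show ?thesis
  proof (rule Bochner_Integration.integrable_bound)
    show "(\<lambda>x. w x * h x) \<in> borel_measurable N" using wi hm by simp
    have "\<bar>w x * h x\<bar> \<le> \<bar>w x + w x * (h x)\<^sup>2\<bar>" if "x \<in> space N" for x
    proof -
      have "\<bar>h x\<bar> \<le> 1 + (h x)\<^sup>2"
        using abs_mult_le_sum_squares[of 1 "h x"] by simp
      then have "w x * \<bar>h x\<bar> \<le> w x * (1 + (h x)\<^sup>2)"
        using w0 that by (intro mult_left_mono) auto
      then show ?thesis
        using w0 that by (simp add: abs_mult distrib_left)
    qed
    then show "AE x in N. norm (w x * h x) \<le> norm (w x + w x * (h x)\<^sup>2)"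
      by (intro AE_I2) simp
  qed
qed

lemma jensen_square_density:
  fixes w h :: "'b \<Rightarrow> real"
  assumes w: "prob_density N w" and hm: "h \<in> borel_measurable N"
  shows "ennreal ((\<integral>x. w x * h x \<partial>N)\<^sup>2) \<le> (\<integral>\<^sup>+x. ennreal (w x * (h x)\<^sup>2) \<partial>N)"
proof (cases "(\<integral>\<^sup>+x. ennreal (w x * (h x)\<^sup>2) \<partial>N) < \<infinity>")
  case False
  then show ?thesis by (simp add: not_less top_unique)
next
  case True
  have w0: "\<forall>x\<in>space N. 0 \<le> w x" and wi: "integrable N w" and w1: "(\<integral>x. w x \<partial>N) = 1"
    using w by (auto simp: prob_density_def)
  have whh: "integrable N (\<lambda>x. w x * (h x)\<^sup>2)"
    using wi hm w0 True by (intro integrableI_nonneg) (auto intro!: AE_I2)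
  have wh: "integrable N (\<lambda>x. w x * h x)"
    using w0 wi hm True by (rule integrable_density_mult)
  define c where "c = (\<integral>x. w x * h x \<partial>N)"
  \<comment> \<open>the variance of h under w is nonnegative\<close>
  have "0 \<le> (\<integral>x. w x * (h x - c)\<^sup>2 \<partial>N)"
    using w0 by (intro integral_nonneg_AE AE_I2) auto
  also have "(\<integral>x. w x * (h x - c)\<^sup>2 \<partial>N)
      = (\<integral>x. w x * (h x)\<^sup>2 - (2 * c) * (w x * h x) + c\<^sup>2 * w x \<partial>N)"
    by (intro Bochner_Integration.integral_cong) (auto simp: power2_eq_square algebra_simps)
  also have "\<dots> = (\<integral>x. w x * (h x)\<^sup>2 \<partial>N) - c\<^sup>2"
    using wh whh wi w1 by (simp add: c_def power2_eq_square)
  finally have "ennreal (c\<^sup>2) \<le> ennreal (\<integral>x. w x * (h x)\<^sup>2 \<partial>N)"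
    by (intro ennreal_leI) simp
  also have "\<dots> = (\<integral>\<^sup>+x. ennreal (w x * (h x)\<^sup>2) \<partial>N)"
    using whh w0 by (intro nn_integral_eq_integral[symmetric] AE_I2) auto
  finally show ?thesis unfolding c_def .
qed

lemma integrable_density_mult_prod:
  fixes w u z :: "'b \<Rightarrow> real"
  assumes w0: "\<forall>x\<in>space N. 0 \<le> w x" and wm: "w \<in> borel_measurable N"
    and um: "u \<in> borel_measurable N" and zm: "z \<in> borel_measurable N"
    and iu: "integrable N (\<lambda>x. w x * (u x)\<^sup>2)" and iz: "integrable N (\<lambda>x. w x * (z x)\<^sup>2)"
  shows "integrable N (\<lambda>x. w x * (u x * z x))"
proof -
  have "integrable N (\<lambda>x. w x * (u x)\<^sup>2 + w x * (z x)\<^sup>2)" using iu iz by simp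
  then show ?thesis
  proof (rule Bochner_Integration.integrable_bound)
    show "(\<lambda>x. w x * (u x * z x)) \<in> borel_measurable N" using wm um zm by simp
    have "w x * \<bar>u x * z x\<bar> \<le> w x * ((u x)\<^sup>2 + (z x)\<^sup>2)" if "x \<in> space N" for x
      using w0 that abs_mult_le_sum_squares by (intro mult_left_mono) auto
    then show "AE x in N. norm (w x * (u x * z x)) \<le> norm (w x * (u x)\<^sup>2 + w x * (z x)\<^sup>2)"
      using w0 by (intro AE_I2) (simp add: abs_mult algebra_simps)
  qed
qed

lemma abs_integral_density_le:
  fixes w g :: "'b \<Rightarrow> real"
  assumes w: "prob_density N w"
    and gm: "g \<in> borel_measurable N" and gb: "\<forall>x\<in>space N. \<bar>g x\<bar> \<le> B"
  shows "\<bar>\<integral>x. w x * g x \<partial>N\<bar> \<le> B"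
proof -
  have w0: "\<forall>x\<in>space N. 0 \<le> w x" and wi: "integrable N w" and w1: "(\<integral>x. w x \<partial>N) = 1"
    using w by (auto simp: prob_density_def)
  have bound: "\<bar>w x * g x\<bar> \<le> w x * B" if "x \<in> space N" for x
    using w0 gb that by (auto simp: abs_mult intro!: mult_left_mono)
  have wB: "integrable N (\<lambda>x. w x * B)" using wi by simp
  have int: "integrable N (\<lambda>x. w x * g x)"
    using wB by (rule Bochner_Integration.integrable_bound)
      (use wi gm bound in \<open>auto intro!: AE_I2 order.trans[OF _ abs_ge_self]\<close>)
  have "\<bar>\<integral>x. w x * g x \<partial>N\<bar> \<le> (\<integral>x. \<bar>w x * g x\<bar> \<partial>N)" by (rule integral_abs_bound)
  also have "\<dots> \<le> (\<integral>x. w x * B \<partial>N)"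
    using bound by (intro integral_mono[OF integrable_abs[OF int] wB])
  also have "\<dots> = B" using w1 by simp
  finally show ?thesis .
qed

lemma contraction_sup_bound:
  fixes u :: "'b \<Rightarrow> real"
  assumes bdd: "bdd_above ((\<lambda>y. \<bar>u y\<bar>) ` A)" and \<gamma>: "\<gamma> < 1" and x: "x \<in> A"
    and le: "\<And>y. y \<in> A \<Longrightarrow> \<bar>u y\<bar> \<le> S + \<gamma> * (SUP y\<in>A. \<bar>u y\<bar>)"
  shows "(1 - \<gamma>) * \<bar>u x\<bar> \<le> S"
proof -
  let ?U = "SUP y\<in>A. \<bar>u y\<bar>"
  have "?U \<le> S + \<gamma> * ?U" using x le by (intro cSUP_least) auto
  moreover have "\<bar>u x\<bar> \<le> ?U" by (rule cSUP_upper[OF x bdd])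
  ultimately have "(1 - \<gamma>) * \<bar>u x\<bar> \<le> (1 - \<gamma>) * ?U"
    using \<gamma> by (intro mult_left_mono) auto
  also have "\<dots> \<le> S" using \<open>?U \<le> S + \<gamma> * ?U\<close> by (simp add: algebra_simps)
  finally show ?thesis .
qed

lemma quad_form_integral:
  assumes "\<And>i j. i < J \<Longrightarrow> j < J \<Longrightarrow> integrable N (K i j)"
  shows "integrable N (\<lambda>x. quad_form J (\<lambda>i j. K i j x) v)"
    and "quad_form J (\<lambda>i j. \<integral>x. K i j x \<partial>N) v = (\<integral>x. quad_form J (\<lambda>i j. K i j x) v \<partial>N)"
proof -
  have int: "integrable N (\<lambda>x. \<Sum>j<J. v i * v j * K i j x)" if "i < J" for i
    using assms that by (intro Bochner_Integration.integrable_sum Bochner_Integration.integrable_mult_right) auto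
  show "integrable N (\<lambda>x. quad_form J (\<lambda>i j. K i j x) v)"
    unfolding quad_form_def by (rule Bochner_Integration.integrable_sum) (simp add: int)
  have "(\<integral>x. quad_form J (\<lambda>i j. K i j x) v \<partial>N) = (\<Sum>i<J. \<integral>x. (\<Sum>j<J. v i * v j * K i j x) \<partial>N)"
    unfolding quad_form_def using int by (intro Bochner_Integration.integral_sum) auto
  also have "\<dots> = quad_form J (\<lambda>i j. \<integral>x. K i j x \<partial>N) v"
    unfolding quad_form_def using assms
    by (intro sum.cong refl) (simp add: Bochner_Integration.integral_sum)
  finally show "quad_form J (\<lambda>i j. \<integral>x. K i j x \<partial>N) v = (\<integral>x. quad_form J (\<lambda>i j. K i j x) v \<partial>N)" ..
qed

section \<open>The transition operator of the target policy\<close>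

definition policy_avg :: "'a measure \<Rightarrow> ('s \<Rightarrow> 'a \<Rightarrow> real) \<Rightarrow> ('s \<times> 'a \<Rightarrow> real) \<Rightarrow> 's \<Rightarrow> real" where
  "policy_avg Am pol h s = (\<integral>a. pol s a * h (s, a) \<partial>Am)"

definition transition_op :: "'s measure \<Rightarrow> 'a measure \<Rightarrow> ('s \<Rightarrow> 'a \<Rightarrow> 's \<Rightarrow> real)
    \<Rightarrow> ('s \<Rightarrow> 'a \<Rightarrow> real) \<Rightarrow> ('s \<times> 'a \<Rightarrow> real) \<Rightarrow> 's \<times> 'a \<Rightarrow> real" where
  "transition_op Sm Am q pol h x = (\<integral>s'. q (fst x) (snd x) s' * policy_avg Am pol h s' \<partial>Sm)"

locale policy_kernel =
  fixes Sm :: "'s measure" and Am :: "'a measure"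
    and q :: "'s \<Rightarrow> 'a \<Rightarrow> 's \<Rightarrow> real" and pol :: "'s \<Rightarrow> 'a \<Rightarrow> real" and p2max :: real
  assumes sigma_finite_S: "sigma_finite_measure Sm" and sigma_finite_A: "sigma_finite_measure Am"
    and q_measurable: "(\<lambda>(x, s'). q (fst x) (snd x) s') \<in> borel_measurable (SAM Sm Am \<Otimes>\<^sub>M Sm)"
    and q_density: "\<And>x. x \<in> space (SAM Sm Am) \<Longrightarrow> prob_density Sm (q (fst x) (snd x))"
    and pol_measurable: "(\<lambda>x. pol (fst x) (snd x)) \<in> borel_measurable (SAM Sm Am)"
    and pol_density: "\<And>s. s \<in> space Sm \<Longrightarrow> prob_density Am (pol s)"
    and q_pol_bound: "\<And>x s' a. x \<in> space (SAM Sm Am) \<Longrightarrow> s' \<in> space Sm \<Longrightarrow> a \<in> space Am \<Longrightarrow>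
      q (fst x) (snd x) s' * pol s' a \<le> p2max"
    and p2max_nonneg: "0 \<le> p2max"
begin

abbreviation "M \<equiv> SAM Sm Am"
abbreviation "Q x \<equiv> q (fst x) (snd x)"
abbreviation "Hpol \<equiv> policy_avg Am pol"
abbreviation "Ppol \<equiv> transition_op Sm Am q pol"

definition square_integrable :: "('s \<times> 'a \<Rightarrow> real) \<Rightarrow> bool" where
  "square_integrable h \<longleftrightarrow> h \<in> borel_measurable M \<and> integrable M (\<lambda>y. (h y)\<^sup>2)"

definition sq_integral :: "('s \<times> 'a \<Rightarrow> real) \<Rightarrow> real" where
  "sq_integral h = (\<integral>y. (h y)\<^sup>2 \<partial>M)"

lemma M_eq: "M = Sm \<Otimes>\<^sub>M Am"
  by (simp add: SAM_def)

lemma space_M: "space M = space Sm \<times> space Am"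
  by (simp add: SAM_def space_pair_measure)

lemma Q_nonneg: "x \<in> space M \<Longrightarrow> s' \<in> space Sm \<Longrightarrow> 0 \<le> Q x s'"
  and Q_integrable: "x \<in> space M \<Longrightarrow> integrable Sm (Q x)"
  and Q_total: "x \<in> space M \<Longrightarrow> (\<integral>s'. Q x s' \<partial>Sm) = 1"
  using q_density by (auto simp: prob_density_def)

lemma Q_measurable: "x \<in> space M \<Longrightarrow> Q x \<in> borel_measurable Sm"
  using Q_integrable by simp

lemma pol_nonneg: "s \<in> space Sm \<Longrightarrow> a \<in> space Am \<Longrightarrow> 0 \<le> pol s a"
  and pol_integrable: "s \<in> space Sm \<Longrightarrow> integrable Am (pol s)"
  using pol_density by (auto simp: prob_density_def)

lemma measurable_slice:
  assumes "h \<in> borel_measurable M" and "s \<in> space Sm"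
  shows "(\<lambda>a. h (s, a)) \<in> borel_measurable Am"
  using measurable_Pair2[of h Sm Am borel s] assms by (simp add: SAM_def)

lemma measurable_policy_avg:
  assumes "h \<in> borel_measurable M"
  shows "Hpol h \<in> borel_measurable Sm"
proof -
  have "(\<lambda>(s, a). pol s a * h (s, a)) \<in> borel_measurable (Sm \<Otimes>\<^sub>M Am)"
    using pol_measurable assms by (simp add: SAM_def case_prod_beta')
  then show ?thesis unfolding policy_avg_def[abs_def]
    by (rule sigma_finite_measure.borel_measurable_lebesgue_integral[OF sigma_finite_A])
qed

lemma measurable_transition_op:
  assumes "h \<in> borel_measurable M"
  shows "Ppol h \<in> borel_measurable M"
proof -
  have "(\<lambda>z. (\<lambda>(x, s'). q (fst x) (snd x) s') z * Hpol h (snd z)) \<in> borel_measurable (M \<Otimes>\<^sub>M Sm)"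
    using q_measurable measurable_compose[OF measurable_snd measurable_policy_avg[OF assms]]
    by (intro borel_measurable_times)
  then have "(\<lambda>(x, s'). Q x s' * Hpol h s') \<in> borel_measurable (M \<Otimes>\<^sub>M Sm)"
    by (simp add: case_prod_beta')
  then show ?thesis unfolding transition_op_def[abs_def]
    by (rule sigma_finite_measure.borel_measurable_lebesgue_integral[OF sigma_finite_S])
qed

lemma nn_integral_kernel_policy_le:
  assumes x: "x \<in> space M" and hm: "h \<in> borel_measurable M"
  shows "(\<integral>\<^sup>+s'. ennreal (Q x s') * (\<integral>\<^sup>+a. ennreal (pol s' a * (h (s', a))\<^sup>2) \<partial>Am) \<partial>Sm)
     \<le> ennreal p2max * (\<integral>\<^sup>+y. ennreal ((h y)\<^sup>2) \<partial>M)"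
proof -
  have hm': "(\<lambda>y. ennreal ((h y)\<^sup>2)) \<in> borel_measurable (Sm \<Otimes>\<^sub>M Am)"
    using hm by (simp add: SAM_def)
  have "(\<integral>\<^sup>+s'. ennreal (Q x s') * (\<integral>\<^sup>+a. ennreal (pol s' a * (h (s', a))\<^sup>2) \<partial>Am) \<partial>Sm)
      = (\<integral>\<^sup>+s'. (\<integral>\<^sup>+a. ennreal (Q x s' * pol s' a * (h (s', a))\<^sup>2) \<partial>Am) \<partial>Sm)"
  proof (intro nn_integral_cong)
    fix s' assume s': "s' \<in> space Sm"
    have "ennreal (Q x s') * (\<integral>\<^sup>+a. ennreal (pol s' a * (h (s', a))\<^sup>2) \<partial>Am)
        = (\<integral>\<^sup>+a. ennreal (Q x s') * ennreal (pol s' a * (h (s', a))\<^sup>2) \<partial>Am)"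
      using measurable_slice[OF hm s'] pol_integrable[OF s']
      by (intro nn_integral_cmult[symmetric]) simp
    also have "\<dots> = (\<integral>\<^sup>+a. ennreal (Q x s' * pol s' a * (h (s', a))\<^sup>2) \<partial>Am)"
      using Q_nonneg[OF x s'] by (intro nn_integral_cong) (simp add: ennreal_mult' mult.assoc)
    finally show "ennreal (Q x s') * (\<integral>\<^sup>+a. ennreal (pol s' a * (h (s', a))\<^sup>2) \<partial>Am)
        = (\<integral>\<^sup>+a. ennreal (Q x s' * pol s' a * (h (s', a))\<^sup>2) \<partial>Am)" .
  qed
  also have "\<dots> \<le> (\<integral>\<^sup>+s'. (\<integral>\<^sup>+a. ennreal p2max * ennreal ((h (s', a))\<^sup>2) \<partial>Am) \<partial>Sm)"
    using q_pol_bound[OF x] p2max_nonneg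
    by (intro nn_integral_mono) (simp add: ennreal_mult[symmetric] ennreal_leI mult_right_mono)
  also have "\<dots> = (\<integral>\<^sup>+s'. ennreal p2max * (\<integral>\<^sup>+a. ennreal ((h (s', a))\<^sup>2) \<partial>Am) \<partial>Sm)"
    using measurable_slice[OF hm] by (intro nn_integral_cong nn_integral_cmult) simp
  also have "\<dots> = ennreal p2max * (\<integral>\<^sup>+s'. (\<integral>\<^sup>+a. ennreal ((h (s', a))\<^sup>2) \<partial>Am) \<partial>Sm)"
    by (intro nn_integral_cmult sigma_finite_measure.borel_measurable_nn_integral_fst[OF sigma_finite_A hm'])
  also have "(\<integral>\<^sup>+s'. (\<integral>\<^sup>+a. ennreal ((h (s', a))\<^sup>2) \<partial>Am) \<partial>Sm) = (\<integral>\<^sup>+y. ennreal ((h y)\<^sup>2) \<partial>M)"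
    unfolding M_eq using sigma_finite_measure.nn_integral_fst[OF sigma_finite_A hm'] by simp
  finally show ?thesis .
qed

lemma policy_avg_sq_le:
  assumes hm: "h \<in> borel_measurable M" and s: "s \<in> space Sm"
  shows "ennreal ((Hpol h s)\<^sup>2) \<le> (\<integral>\<^sup>+a. ennreal (pol s a * (h (s, a))\<^sup>2) \<partial>Am)"
  unfolding policy_avg_def using pol_density[OF s] measurable_slice[OF hm s]
  by (rule jensen_square_density)

lemma nn_integral_kernel_policy_avg_sq_le:
  assumes x: "x \<in> space M" and hm: "h \<in> borel_measurable M"
  shows "(\<integral>\<^sup>+s'. ennreal (Q x s' * (Hpol h s')\<^sup>2) \<partial>Sm) \<le> ennreal p2max * (\<integral>\<^sup>+y. ennreal ((h y)\<^sup>2) \<partial>M)"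
proof -
  have "(\<integral>\<^sup>+s'. ennreal (Q x s' * (Hpol h s')\<^sup>2) \<partial>Sm)
      \<le> (\<integral>\<^sup>+s'. ennreal (Q x s') * (\<integral>\<^sup>+a. ennreal (pol s' a * (h (s', a))\<^sup>2) \<partial>Am) \<partial>Sm)"
    using Q_nonneg[OF x] policy_avg_sq_le[OF hm]
    by (intro nn_integral_mono) (simp add: ennreal_mult mult_left_mono)
  also have "\<dots> \<le> ennreal p2max * (\<integral>\<^sup>+y. ennreal ((h y)\<^sup>2) \<partial>M)"
    by (rule nn_integral_kernel_policy_le[OF x hm])
  finally show ?thesis .
qed

lemma sq_integral_nonneg: "0 \<le> sq_integral h"
  unfolding sq_integral_def by simp

lemma nn_integral_square_eq:
  "square_integrable h \<Longrightarrow> (\<integral>\<^sup>+y. ennreal ((h y)\<^sup>2) \<partial>M) = ennreal (sq_integral h)"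
  unfolding square_integrable_def sq_integral_def by (intro nn_integral_eq_integral) auto

lemma kernel_policy_avg_sq:
  assumes x: "x \<in> space M" and h: "square_integrable h"
  shows "integrable Sm (\<lambda>s'. Q x s' * Hpol h s')"
    and "integrable Sm (\<lambda>s'. Q x s' * (Hpol h s')\<^sup>2)"
    and "(\<integral>s'. Q x s' * (Hpol h s')\<^sup>2 \<partial>Sm) \<le> p2max * sq_integral h"
proof -
  have hm: "h \<in> borel_measurable M" using h by (simp add: square_integrable_def)
  note Hm = measurable_policy_avg[OF hm]
  have bnd: "(\<integral>\<^sup>+s'. ennreal (Q x s' * (Hpol h s')\<^sup>2) \<partial>Sm) \<le> ennreal (p2max * sq_integral h)"
    using nn_integral_kernel_policy_avg_sq_le[OF x hm] p2max_nonneg sq_integral_nonneg[of h]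
    by (simp add: nn_integral_square_eq[OF h] ennreal_mult)
  then have fin: "(\<integral>\<^sup>+s'. ennreal (Q x s' * (Hpol h s')\<^sup>2) \<partial>Sm) < \<infinity>"
    using le_less_trans[OF bnd ennreal_less_top] by simp
  show "integrable Sm (\<lambda>s'. Q x s' * Hpol h s')"
    using Q_nonneg[OF x] Q_integrable[OF x] Hm fin by (intro integrable_density_mult) auto
  show i2: "integrable Sm (\<lambda>s'. Q x s' * (Hpol h s')\<^sup>2)"
    using Q_nonneg[OF x] Q_measurable[OF x] Hm fin by (intro integrableI_nonneg) (auto intro!: AE_I2)
  have "ennreal (\<integral>s'. Q x s' * (Hpol h s')\<^sup>2 \<partial>Sm) = (\<integral>\<^sup>+s'. ennreal (Q x s' * (Hpol h s')\<^sup>2) \<partial>Sm)"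
    using i2 Q_nonneg[OF x] by (intro nn_integral_eq_integral[symmetric]) (auto intro!: AE_I2)
  with bnd have "ennreal (\<integral>s'. Q x s' * (Hpol h s')\<^sup>2 \<partial>Sm) \<le> ennreal (p2max * sq_integral h)"
    by simp
  then show "(\<integral>s'. Q x s' * (Hpol h s')\<^sup>2 \<partial>Sm) \<le> p2max * sq_integral h"
    using p2max_nonneg sq_integral_nonneg[of h] by (subst (asm) ennreal_le_iff) auto
qed

lemma transition_op_sq_le:
  assumes x: "x \<in> space M" and h: "square_integrable h"
  shows "(Ppol h x)\<^sup>2 \<le> p2max * sq_integral h"
proof -
  have hm: "h \<in> borel_measurable M" using h by (simp add: square_integrable_def)
  have "ennreal ((Ppol h x)\<^sup>2) \<le> (\<integral>\<^sup>+s'. ennreal (Q x s' * (Hpol h s')\<^sup>2) \<partial>Sm)"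
    unfolding transition_op_def using q_density[OF x] measurable_policy_avg[OF hm]
    by (rule jensen_square_density)
  also have "\<dots> = ennreal (\<integral>s'. Q x s' * (Hpol h s')\<^sup>2 \<partial>Sm)"
    using kernel_policy_avg_sq(2)[OF x h] Q_nonneg[OF x]
    by (intro nn_integral_eq_integral) (auto intro!: AE_I2)
  finally have "(Ppol h x)\<^sup>2 \<le> (\<integral>s'. Q x s' * (Hpol h s')\<^sup>2 \<partial>Sm)"
    using Q_nonneg[OF x] by (subst (asm) ennreal_le_iff) (auto intro!: integral_nonneg_AE AE_I2)
  with kernel_policy_avg_sq(3)[OF x h] show ?thesis by linarith
qed

lemma abs_transition_op_le_sqrt:
  "x \<in> space M \<Longrightarrow> square_integrable h \<Longrightarrow> \<bar>Ppol h x\<bar> \<le> sqrt (p2max * sq_integral h)"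
  using real_le_rsqrt[of "\<bar>Ppol h x\<bar>"] transition_op_sq_le by simp

lemma AE_policy_integrable:
  assumes x: "x \<in> space M" and h: "square_integrable h"
  shows "AE s' in Sm. Q x s' \<noteq> 0 \<longrightarrow> integrable Am (\<lambda>a. pol s' a * h (s', a))"
proof -
  have hm: "h \<in> borel_measurable M" using h by (simp add: square_integrable_def)
  have hm': "(\<lambda>y. ennreal (pol (fst y) (snd y) * (h y)\<^sup>2)) \<in> borel_measurable (Sm \<Otimes>\<^sub>M Am)"
    using hm pol_measurable by (simp add: SAM_def)
  have "(\<integral>\<^sup>+s'. ennreal (Q x s') * (\<integral>\<^sup>+a. ennreal (pol s' a * (h (s', a))\<^sup>2) \<partial>Am) \<partial>Sm)
      \<le> ennreal p2max * ennreal (sq_integral h)"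
    using nn_integral_kernel_policy_le[OF x hm] unfolding nn_integral_square_eq[OF h] .
  also have "\<dots> < \<infinity>" by (simp add: ennreal_mult_less_top)
  finally have "(\<integral>\<^sup>+s'. ennreal (Q x s') * (\<integral>\<^sup>+a. ennreal (pol s' a * (h (s', a))\<^sup>2) \<partial>Am) \<partial>Sm) \<noteq> \<infinity>"
    by simp
  moreover have "(\<lambda>s'. ennreal (Q x s') * (\<integral>\<^sup>+a. ennreal (pol s' a * (h (s', a))\<^sup>2) \<partial>Am))
      \<in> borel_measurable Sm"
    using Q_measurable[OF x] sigma_finite_measure.borel_measurable_nn_integral_fst[OF sigma_finite_A hm']
    by simp
  ultimately have "AE s' in Sm. ennreal (Q x s') * (\<integral>\<^sup>+a. ennreal (pol s' a * (h (s', a))\<^sup>2) \<partial>Am) \<noteq> \<infinity>"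
    by (intro nn_integral_PInf_AE)
  then show ?thesis
  proof (rule AE_mp, intro AE_I2 impI)
    fix s' assume s': "s' \<in> space Sm"
      and fin: "ennreal (Q x s') * (\<integral>\<^sup>+a. ennreal (pol s' a * (h (s', a))\<^sup>2) \<partial>Am) \<noteq> \<infinity>"
      and "Q x s' \<noteq> 0"
    then have "0 < Q x s'" using Q_nonneg[OF x s'] by simp
    with fin have "(\<integral>\<^sup>+a. ennreal (pol s' a * (h (s', a))\<^sup>2) \<partial>Am) < \<infinity>"
      by (auto simp: ennreal_mult_eq_top_iff less_top)
    then show "integrable Am (\<lambda>a. pol s' a * h (s', a))"
      using pol_nonneg[OF s'] pol_integrable[OF s'] measurable_slice[OF hm s']
      by (intro integrable_density_mult) auto
  qed
qed

lemma square_integrable_add_scaled: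
  assumes "square_integrable h1" and "square_integrable h2"
  shows "square_integrable (\<lambda>y. h1 y + c * h2 y)"
proof -
  have m: "h1 \<in> borel_measurable M" "h2 \<in> borel_measurable M"
    using assms by (auto simp: square_integrable_def)
  have "integrable M (\<lambda>y. 2 * (h1 y)\<^sup>2 + 2 * (c * h2 y)\<^sup>2)"
    using assms by (simp add: square_integrable_def power_mult_distrib)
  then have "integrable M (\<lambda>y. (h1 y + c * h2 y)\<^sup>2)"
    by (rule Bochner_Integration.integrable_bound) (use m square_sum_le in auto)
  with m show ?thesis by (simp add: square_integrable_def)
qed

lemma square_integrable_sum:
  assumes "finite I" and "\<And>i. i \<in> I \<Longrightarrow> square_integrable (g i)"
  shows "square_integrable (\<lambda>y. \<Sum>i\<in>I. c i * g i y)"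
  using assms
proof (induction I rule: finite_induct)
  case empty
  then show ?case by (simp add: square_integrable_def)
next
  case (insert i I)
  then have "square_integrable (\<lambda>y. (\<Sum>i\<in>I. c i * g i y) + c i * g i y)"
    by (intro square_integrable_add_scaled) auto
  with insert show ?case by (simp add: add.commute)
qed

lemma square_integrable_bounded:
  assumes fin: "emeasure M (space M) < \<infinity>"
    and hm: "h \<in> borel_measurable M" and hb: "\<And>y. y \<in> space M \<Longrightarrow> \<bar>h y\<bar> \<le> B"
  shows "square_integrable h"
proof -
  interpret finite_measure M using fin by (intro finite_measureI) simp
  have "integrable M (\<lambda>y. B\<^sup>2)" by simp
  then have "integrable M (\<lambda>y. (h y)\<^sup>2)"
  proof (rule Bochner_Integration.integrable_bound)
    show "(\<lambda>y. (h y)\<^sup>2) \<in> borel_measurable M" using hm by simp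
    have "\<bar>h y\<bar>\<^sup>2 \<le> B\<^sup>2" if "y \<in> space M" for y
      using hb[OF that] by (intro power_mono) auto
    then show "AE y in M. norm ((h y)\<^sup>2) \<le> norm (B\<^sup>2)"
      by (intro AE_I2) simp
  qed
  with hm show ?thesis by (simp add: square_integrable_def)
qed

lemma transition_op_add_scaled:
  assumes x: "x \<in> space M" and h1: "square_integrable h1" and h2: "square_integrable h2"
  shows "Ppol (\<lambda>y. h1 y + c * h2 y) x = Ppol h1 x + c * Ppol h2 x"
proof -
  have m1: "h1 \<in> borel_measurable M" and m2: "h2 \<in> borel_measurable M"
    using h1 h2 by (auto simp: square_integrable_def)
  \<comment> \<open>a Bochner integral is additive only on integrable slices, which suffice q-almost everywhere\<close>
  have "AE s' in Sm. Q x s' * Hpol (\<lambda>y. h1 y + c * h2 y) s'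
      = Q x s' * Hpol h1 s' + c * (Q x s' * Hpol h2 s')"
    using AE_policy_integrable[OF x h1] AE_policy_integrable[OF x h2]
  proof eventually_elim
    case (elim s')
    show ?case
    proof (cases "Q x s' = 0")
      case False
      with elim have "Hpol (\<lambda>y. h1 y + c * h2 y) s' = Hpol h1 s' + c * Hpol h2 s'"
        unfolding policy_avg_def by (simp add: distrib_left mult.left_commute)
      then show ?thesis by (simp add: algebra_simps)
    qed simp
  qed
  then have "Ppol (\<lambda>y. h1 y + c * h2 y) x
      = (\<integral>s'. Q x s' * Hpol h1 s' + c * (Q x s' * Hpol h2 s') \<partial>Sm)"
    unfolding transition_op_def
    using Q_measurable[OF x] measurable_policy_avg m1 m2
    by (intro integral_cong_AE) auto
  also have "\<dots> = Ppol h1 x + c * Ppol h2 x"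
    unfolding transition_op_def
    using kernel_policy_avg_sq(1)[OF x h1] kernel_policy_avg_sq(1)[OF x h2] by simp
  finally show ?thesis .
qed

lemma transition_op_sum:
  assumes x: "x \<in> space M" and "finite I" and "\<And>i. i \<in> I \<Longrightarrow> square_integrable (g i)"
  shows "Ppol (\<lambda>y. \<Sum>i\<in>I. c i * g i y) x = (\<Sum>i\<in>I. c i * Ppol (g i) x)"
  using assms(2,3)
proof (induction I rule: finite_induct)
  case empty
  then show ?case by (simp add: transition_op_def policy_avg_def)
next
  case (insert i I)
  have "Ppol (\<lambda>y. \<Sum>i\<in>insert i I. c i * g i y) x = Ppol (\<lambda>y. (\<Sum>i\<in>I. c i * g i y) + c i * g i y) x"
    using insert by (simp add: add.commute)
  also have "\<dots> = Ppol (\<lambda>y. \<Sum>i\<in>I. c i * g i y) x + c i * Ppol (g i) x"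
    using insert by (intro transition_op_add_scaled[OF x] square_integrable_sum) auto
  finally show ?case using insert by (simp add: add.commute)
qed

lemma abs_transition_op_le:
  assumes x: "x \<in> space M" and hm: "h \<in> borel_measurable M"
    and hb: "\<And>y. y \<in> space M \<Longrightarrow> \<bar>h y\<bar> \<le> B"
  shows "\<bar>Ppol h x\<bar> \<le> B"
proof -
  have "\<bar>Hpol h s'\<bar> \<le> B" if s': "s' \<in> space Sm" for s'
    unfolding policy_avg_def using pol_density[OF s'] measurable_slice[OF hm s']
    by (rule abs_integral_density_le) (use hb s' in \<open>auto simp: space_M\<close>)
  then show ?thesis
    unfolding transition_op_def
    by (intro abs_integral_density_le[OF q_density[OF x] measurable_policy_avg[OF hm]]) auto
qed

end

section \<open>The Gram matrix of the temporal-difference features\<close>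

locale policy_evaluation = policy_kernel Sm Am q pol p2max
  for Sm :: "'s measure" and Am :: "'a measure" and q pol p2max +
  fixes d :: "'s \<times> 'a \<Rightarrow> real" and \<gamma> pmin p1max :: real
  assumes d_density: "prob_density (SAM Sm Am) d"
    and d_bounds: "AE x in SAM Sm Am. pmin \<le> d x \<and> d x \<le> p1max"
    and gamma_nonneg: "0 \<le> \<gamma>" and gamma_less_1: "\<gamma> < 1" and pmin_pos: "0 < pmin"
begin

lemma d_nonneg: "x \<in> space M \<Longrightarrow> 0 \<le> d x"
  and d_integrable: "integrable M d"
  and d_total: "(\<integral>x. d x \<partial>M) = 1"
  using d_density by (auto simp: prob_density_def)

lemma d_measurable: "d \<in> borel_measurable M"
  using d_integrable by simp

lemma pmin_emeasure_space_le: "ennreal pmin * emeasure M (space M) \<le> 1"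
proof -
  have "ennreal pmin * emeasure M (space M) = (\<integral>\<^sup>+x. ennreal pmin \<partial>M)" by simp
  also have "\<dots> \<le> (\<integral>\<^sup>+x. ennreal (d x) \<partial>M)"
    using d_bounds by (intro nn_integral_mono_AE) (auto elim: AE_mp intro: ennreal_leI)
  also have "\<dots> = 1"
    using d_nonneg d_integrable d_total by (subst nn_integral_eq_integral) (auto intro!: AE_I2)
  finally show ?thesis .
qed

lemma emeasure_space_finite: "emeasure M (space M) < \<infinity>"
proof (rule ccontr)
  assume "\<not> emeasure M (space M) < \<infinity>"
  then have "ennreal pmin * emeasure M (space M) = \<infinity>"
    using pmin_pos by (simp add: not_less top_unique ennreal_mult_eq_top_iff)
  with pmin_emeasure_space_le show False by (simp add: top_unique)
qed

lemma AE_False_iff: "(AE x in M. False) \<longleftrightarrow> emeasure M (space M) = 0"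
  by (simp add: eventually_False ae_filter_eq_bot_iff)

lemma measure_space_pos: "0 < measure M (space M)"
proof -
  have "emeasure M (space M) \<noteq> 0"
  proof
    assume "emeasure M (space M) = 0"
    then have "AE x in M. False" by (simp add: AE_False_iff)
    then have "AE x in M. d x = 0" by eventually_elim simp
    then have "(\<integral>x. d x \<partial>M) = 0" by (rule integral_eq_zero_AE)
    with d_total show False by simp
  qed
  then show ?thesis
    using emeasure_space_finite by (simp add: measure_def enn2real_positive_iff zero_less_iff_neq_zero)
qed

lemma pmin_measure_space_le: "pmin * measure M (space M) \<le> 1"
  using pmin_emeasure_space_le emeasure_space_finite pmin_pos
  by (simp add: measure_def ennreal_mult'' ennreal_le_1[symmetric] less_top)

lemma pmin_le_p1max: "pmin \<le> p1max"
proof (rule ccontr)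
  assume nle: "\<not> pmin \<le> p1max"
  from d_bounds have "AE x in M. False" by eventually_elim (use nle in linarith)
  then have "emeasure M (space M) = 0" by (simp add: AE_False_iff)
  with measure_space_pos show False by (simp add: measure_def)
qed

lemma integrable_d_mult_prod:
  assumes a: "square_integrable a" and b: "square_integrable b"
  shows "integrable M (\<lambda>x. d x * a x * b x)"
proof -
  have "integrable M (\<lambda>x. p1max * ((a x)\<^sup>2 + (b x)\<^sup>2))"
    using a b by (simp add: square_integrable_def)
  then show ?thesis
  proof (rule Bochner_Integration.integrable_bound)
    show "(\<lambda>x. d x * a x * b x) \<in> borel_measurable M"
      using a b d_measurable by (intro borel_measurable_times) (auto simp: square_integrable_def)
    from d_bounds show "AE x in M. norm (d x * a x * b x) \<le> norm (p1max * ((a x)\<^sup>2 + (b x)\<^sup>2))"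
    proof (rule AE_mp, intro AE_I2 impI)
      fix x assume x: "x \<in> space M" and dx: "pmin \<le> d x \<and> d x \<le> p1max"
      have "\<bar>d x * a x * b x\<bar> = d x * \<bar>a x * b x\<bar>"
        using d_nonneg[OF x] by (simp add: abs_mult)
      also have "\<dots> \<le> p1max * ((a x)\<^sup>2 + (b x)\<^sup>2)"
        using dx d_nonneg[OF x] abs_mult_le_sum_squares[of "a x" "b x"] by (intro mult_mono) auto
      finally show "norm (d x * a x * b x) \<le> norm (p1max * ((a x)\<^sup>2 + (b x)\<^sup>2))" by simp
    qed
  qed
qed

lemma integrable_d_mult_sq: "square_integrable h \<Longrightarrow> integrable M (\<lambda>x. d x * (h x)\<^sup>2)"
  using integrable_d_mult_prod[of h h] by (simp add: power2_eq_square mult.assoc)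

lemma pmin_sq_integral_le:
  assumes "square_integrable g"
  shows "pmin * sq_integral g \<le> (\<integral>x. d x * (g x)\<^sup>2 \<partial>M)"
proof -
  have "pmin * sq_integral g = (\<integral>x. pmin * (g x)\<^sup>2 \<partial>M)"
    by (simp add: sq_integral_def)
  also have "\<dots> \<le> (\<integral>x. d x * (g x)\<^sup>2 \<partial>M)"
  proof (rule integral_mono_AE)
    show "integrable M (\<lambda>x. pmin * (g x)\<^sup>2)"
      using assms by (simp add: square_integrable_def)
    show "integrable M (\<lambda>x. d x * (g x)\<^sup>2)" by (rule integrable_d_mult_sq[OF assms])
    from d_bounds show "AE x in M. pmin * (g x)\<^sup>2 \<le> d x * (g x)\<^sup>2"
      by eventually_elim (auto intro: mult_right_mono)
  qed
  finally show ?thesis .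
qed

lemma square_integrable_transition_op:
  assumes f: "square_integrable f"
  shows "square_integrable (Ppol f)"
proof (rule square_integrable_bounded[OF emeasure_space_finite])
  show "Ppol f \<in> borel_measurable M"
    using f by (intro measurable_transition_op) (simp add: square_integrable_def)
  show "\<bar>Ppol f y\<bar> \<le> sqrt (p2max * sq_integral f)" if "y \<in> space M" for y
    using abs_transition_op_le_sqrt[OF that f] .
qed

lemma transition_op_resolvent_bound:
  assumes f: "square_integrable f" and x: "x \<in> space M"
  shows "((1 - \<gamma>) * Ppol f x)\<^sup>2 \<le> p2max * sq_integral (\<lambda>y. f y - \<gamma> * Ppol f y)"
proof -
  define g where "g = (\<lambda>y. f y - \<gamma> * Ppol f y)"
  have Pf: "square_integrable (Ppol f)" by (rule square_integrable_transition_op[OF f])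
  have Pfm: "Ppol f \<in> borel_measurable M" using Pf by (simp add: square_integrable_def)
  have g: "square_integrable g"
    using square_integrable_add_scaled[OF f Pf, of "- \<gamma>"] by (simp add: g_def)
  define S where "S = sqrt (p2max * sq_integral g)"
  have bdd: "bdd_above ((\<lambda>y. \<bar>Ppol f y\<bar>) ` space M)"
    using abs_transition_op_le_sqrt[OF _ f] by (intro bdd_aboveI2) auto
  have "\<bar>Ppol f y\<bar> \<le> S + \<gamma> * (SUP z\<in>space M. \<bar>Ppol f z\<bar>)" if y: "y \<in> space M" for y
  proof -
    have "Ppol f y = Ppol (\<lambda>z. g z + \<gamma> * Ppol f z) y" by (simp add: g_def)
    also have "\<dots> = Ppol g y + \<gamma> * Ppol (Ppol f) y"
      by (rule transition_op_add_scaled[OF y g Pf])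
    finally have "\<bar>Ppol f y\<bar> \<le> \<bar>Ppol g y\<bar> + \<gamma> * \<bar>Ppol (Ppol f) y\<bar>"
      using abs_triangle_ineq[of "Ppol g y" "\<gamma> * Ppol (Ppol f) y"] gamma_nonneg
      by (simp add: abs_mult)
    moreover have "\<bar>Ppol g y\<bar> \<le> S"
      unfolding S_def by (rule abs_transition_op_le_sqrt[OF y g])
    moreover have "\<gamma> * \<bar>Ppol (Ppol f) y\<bar> \<le> \<gamma> * (SUP z\<in>space M. \<bar>Ppol f z\<bar>)"
      using bdd gamma_nonneg by (intro mult_left_mono abs_transition_op_le[OF y Pfm] cSUP_upper) auto
    ultimately show ?thesis by linarith
  qed
  then have "(1 - \<gamma>) * \<bar>Ppol f x\<bar> \<le> S"
    by (rule contraction_sup_bound[OF bdd gamma_less_1 x])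
  then have "((1 - \<gamma>) * \<bar>Ppol f x\<bar>)\<^sup>2 \<le> S\<^sup>2"
    using gamma_less_1 by (intro power_mono) auto
  then show ?thesis
    using p2max_nonneg sq_integral_nonneg[of g] by (simp add: S_def g_def power_mult_distrib)
qed

lemma sq_le_td_residual_bound:
  assumes f: "square_integrable f" and x: "x \<in> space M"
  shows "(1 - \<gamma>)\<^sup>2 * (f x)\<^sup>2
    \<le> 2 * (f x - \<gamma> * Ppol f x)\<^sup>2 + 2 * p2max * sq_integral (\<lambda>y. f y - \<gamma> * Ppol f y)"
proof -
  have "(1 - \<gamma>)\<^sup>2 \<le> 1" and "\<gamma>\<^sup>2 \<le> 1"
    using gamma_nonneg gamma_less_1 by (auto simp: power_le_one)
  then have "((1 - \<gamma>) * (f x - \<gamma> * Ppol f x))\<^sup>2 \<le> (f x - \<gamma> * Ppol f x)\<^sup>2"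
    and "(\<gamma> * ((1 - \<gamma>) * Ppol f x))\<^sup>2 \<le> ((1 - \<gamma>) * Ppol f x)\<^sup>2"
    by (auto simp: power_mult_distrib intro: mult_left_le_one_le)
  moreover have "(1 - \<gamma>)\<^sup>2 * (f x)\<^sup>2
      \<le> 2 * ((1 - \<gamma>) * (f x - \<gamma> * Ppol f x))\<^sup>2 + 2 * (\<gamma> * ((1 - \<gamma>) * Ppol f x))\<^sup>2"
    using square_sum_le[of "(1 - \<gamma>) * (f x - \<gamma> * Ppol f x)" "\<gamma> * ((1 - \<gamma>) * Ppol f x)"]
    by (simp add: power2_eq_square algebra_simps)
  ultimately show ?thesis
    using transition_op_resolvent_bound[OF f x] by linarith
qed

lemma td_residual_lower_bound:
  assumes f: "square_integrable f"
  shows "pmin * (1 - \<gamma>)\<^sup>2 * (\<integral>x. d x * (f x)\<^sup>2 \<partial>M)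
    \<le> 2 * (pmin + p2max) * (\<integral>x. d x * (f x - \<gamma> * Ppol f x)\<^sup>2 \<partial>M)"
proof -
  define g where "g = (\<lambda>y. f y - \<gamma> * Ppol f y)"
  have g: "square_integrable g"
    using square_integrable_add_scaled[OF f square_integrable_transition_op[OF f], of "- \<gamma>"]
    by (simp add: g_def)
  define D where "D = (\<integral>x. d x * (g x)\<^sup>2 \<partial>M)"
  have pointwise: "(1 - \<gamma>)\<^sup>2 * (f x)\<^sup>2 \<le> 2 * (g x)\<^sup>2 + 2 * p2max * sq_integral g"
    if "x \<in> space M" for x
    using sq_le_td_residual_bound[OF f that] by (simp add: g_def)
  have "(1 - \<gamma>)\<^sup>2 * (\<integral>x. d x * (f x)\<^sup>2 \<partial>M) = (\<integral>x. (1 - \<gamma>)\<^sup>2 * (d x * (f x)\<^sup>2) \<partial>M)"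
    by simp
  also have "\<dots> \<le> (\<integral>x. 2 * (d x * (g x)\<^sup>2) + (2 * p2max * sq_integral g) * d x \<partial>M)"
  proof (rule integral_mono)
    fix x assume x: "x \<in> space M"
    have "d x * ((1 - \<gamma>)\<^sup>2 * (f x)\<^sup>2) \<le> d x * (2 * (g x)\<^sup>2 + 2 * p2max * sq_integral g)"
      using pointwise[OF x] d_nonneg[OF x] by (rule mult_left_mono)
    then show "(1 - \<gamma>)\<^sup>2 * (d x * (f x)\<^sup>2) \<le> 2 * (d x * (g x)\<^sup>2) + (2 * p2max * sq_integral g) * d x"
      by (simp add: algebra_simps)
  qed (use integrable_d_mult_sq[OF f] integrable_d_mult_sq[OF g] d_integrable in simp_all)
  also have "\<dots> = 2 * D + 2 * p2max * sq_integral g"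
    using integrable_d_mult_sq[OF g] d_integrable d_total by (simp add: D_def)
  finally have "(1 - \<gamma>)\<^sup>2 * (\<integral>x. d x * (f x)\<^sup>2 \<partial>M) \<le> 2 * D + 2 * p2max * sq_integral g" .
  then have "pmin * (1 - \<gamma>)\<^sup>2 * (\<integral>x. d x * (f x)\<^sup>2 \<partial>M) \<le> pmin * (2 * D + 2 * p2max * sq_integral g)"
    using pmin_pos by (simp add: mult.assoc)
  also have "\<dots> = 2 * pmin * D + 2 * p2max * (pmin * sq_integral g)"
    by (simp add: algebra_simps)
  also have "\<dots> \<le> 2 * pmin * D + 2 * p2max * D"
    using pmin_sq_integral_le[OF g] p2max_nonneg unfolding D_def
    by (intro add_left_mono mult_left_mono) auto
  also have "\<dots> = 2 * (pmin + p2max) * (\<integral>x. d x * (f x - \<gamma> * Ppol f x)\<^sup>2 \<partial>M)"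
    by (simp add: D_def g_def algebra_simps)
  finally show ?thesis .
qed

definition td_feature :: "('s \<times> 'a \<Rightarrow> real) \<Rightarrow> 's \<times> 'a \<Rightarrow> 's \<Rightarrow> real" where
  "td_feature h x s' = h x - \<gamma> * Hpol h s'"

lemma kappa_eq_td_feature: "kappa Am pol \<gamma> psi i x s' = td_feature (psi i) x s'"
  by (simp add: kappa_def td_feature_def psi_pi_def policy_avg_def)

lemma measurable_td_feature: "h \<in> borel_measurable M \<Longrightarrow> td_feature h x \<in> borel_measurable Sm"
  unfolding td_feature_def[abs_def] using measurable_policy_avg by simp

lemma td_feature_sq_le: "(td_feature h x s')\<^sup>2 \<le> 2 * (h x)\<^sup>2 + 2 * (Hpol h s')\<^sup>2"
proof -
  have "(\<gamma> * Hpol h s')\<^sup>2 \<le> (Hpol h s')\<^sup>2"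
    using gamma_nonneg gamma_less_1
    by (auto simp: power_mult_distrib power_le_one intro: mult_left_le_one_le)
  then show ?thesis
    using square_sum_le[of "h x" "- \<gamma> * Hpol h s'"] by (simp add: td_feature_def)
qed

lemma kernel_td_feature_sq:
  assumes x: "x \<in> space M" and h: "square_integrable h"
  shows "integrable Sm (\<lambda>s'. Q x s' * (td_feature h x s')\<^sup>2)"
    and "(\<integral>s'. Q x s' * (td_feature h x s')\<^sup>2 \<partial>Sm) \<le> 2 * (h x)\<^sup>2 + 2 * p2max * sq_integral h"
proof -
  have hm: "h \<in> borel_measurable M" using h by (simp add: square_integrable_def)
  have i0: "integrable Sm (\<lambda>s'. 2 * (h x)\<^sup>2 * Q x s' + 2 * (Q x s' * (Hpol h s')\<^sup>2))"
    using Q_integrable[OF x] kernel_policy_avg_sq(2)[OF x h] by simp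
  have bound: "Q x s' * (td_feature h x s')\<^sup>2 \<le> 2 * (h x)\<^sup>2 * Q x s' + 2 * (Q x s' * (Hpol h s')\<^sup>2)"
    if s': "s' \<in> space Sm" for s'
    using mult_left_mono[OF td_feature_sq_le Q_nonneg[OF x s']] by (simp add: algebra_simps)
  show i1: "integrable Sm (\<lambda>s'. Q x s' * (td_feature h x s')\<^sup>2)"
    using i0
  proof (rule Bochner_Integration.integrable_bound)
    show "(\<lambda>s'. Q x s' * (td_feature h x s')\<^sup>2) \<in> borel_measurable Sm"
      using Q_measurable[OF x] measurable_td_feature[OF hm] by simp
    show "AE s' in Sm. norm (Q x s' * (td_feature h x s')\<^sup>2)
        \<le> norm (2 * (h x)\<^sup>2 * Q x s' + 2 * (Q x s' * (Hpol h s')\<^sup>2))"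
      using bound Q_nonneg[OF x] by (intro AE_I2) auto
  qed
  have "(\<integral>s'. Q x s' * (td_feature h x s')\<^sup>2 \<partial>Sm)
      \<le> (\<integral>s'. 2 * (h x)\<^sup>2 * Q x s' + 2 * (Q x s' * (Hpol h s')\<^sup>2) \<partial>Sm)"
    using i1 i0 bound by (intro integral_mono) auto
  also have "\<dots> = 2 * (h x)\<^sup>2 + 2 * (\<integral>s'. Q x s' * (Hpol h s')\<^sup>2 \<partial>Sm)"
    using Q_integrable[OF x] Q_total[OF x] kernel_policy_avg_sq(2)[OF x h] by simp
  also have "\<dots> \<le> 2 * (h x)\<^sup>2 + 2 * p2max * sq_integral h"
    using kernel_policy_avg_sq(3)[OF x h] by simp
  finally show "(\<integral>s'. Q x s' * (td_feature h x s')\<^sup>2 \<partial>Sm) \<le> 2 * (h x)\<^sup>2 + 2 * p2max * sq_integral h" .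
qed

definition td_gram :: "('s \<times> 'a \<Rightarrow> real) \<Rightarrow> ('s \<times> 'a \<Rightarrow> real) \<Rightarrow> 's \<times> 'a \<Rightarrow> real" where
  "td_gram a b x = (\<integral>s'. Q x s' * (td_feature a x s' * td_feature b x s') \<partial>Sm)"

lemma integrable_kernel_td_product:
  assumes x: "x \<in> space M" and a: "square_integrable a" and b: "square_integrable b"
  shows "integrable Sm (\<lambda>s'. Q x s' * (td_feature a x s' * td_feature b x s'))"
  using a b Q_nonneg[OF x] Q_measurable[OF x] kernel_td_feature_sq(1)[OF x a] kernel_td_feature_sq(1)[OF x b]
  by (intro integrable_density_mult_prod measurable_td_feature) (auto simp: square_integrable_def)

lemma abs_td_gram_le:
  assumes x: "x \<in> space M" and a: "square_integrable a" and b: "square_integrable b"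
  shows "\<bar>td_gram a b x\<bar> \<le> 2 * (a x)\<^sup>2 + 2 * (b x)\<^sup>2 + 2 * p2max * (sq_integral a + sq_integral b)"
proof -
  have "\<bar>td_gram a b x\<bar> \<le> (\<integral>s'. \<bar>Q x s' * (td_feature a x s' * td_feature b x s')\<bar> \<partial>Sm)"
    unfolding td_gram_def by (rule integral_abs_bound)
  also have "\<dots> \<le> (\<integral>s'. Q x s' * (td_feature a x s')\<^sup>2 + Q x s' * (td_feature b x s')\<^sup>2 \<partial>Sm)"
  proof (rule integral_mono)
    fix s' assume s': "s' \<in> space Sm"
    show "\<bar>Q x s' * (td_feature a x s' * td_feature b x s')\<bar>
        \<le> Q x s' * (td_feature a x s')\<^sup>2 + Q x s' * (td_feature b x s')\<^sup>2"
      using mult_left_mono[OF abs_mult_le_sum_squares Q_nonneg[OF x s']] Q_nonneg[OF x s']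
      by (simp add: abs_mult distrib_left)
  qed (use integrable_kernel_td_product[OF x a b] kernel_td_feature_sq(1)[OF x a]
      kernel_td_feature_sq(1)[OF x b] in simp_all)
  also have "\<dots> \<le> (2 * (a x)\<^sup>2 + 2 * p2max * sq_integral a) + (2 * (b x)\<^sup>2 + 2 * p2max * sq_integral b)"
    using kernel_td_feature_sq[OF x a] kernel_td_feature_sq[OF x b] by simp
  finally show ?thesis by (simp add: algebra_simps)
qed

lemma measurable_td_gram:
  assumes a: "square_integrable a" and b: "square_integrable b"
  shows "td_gram a b \<in> borel_measurable M"
proof -
  have am: "a \<in> borel_measurable M" and bm: "b \<in> borel_measurable M"
    using a b by (auto simp: square_integrable_def)
  have "(\<lambda>z. (\<lambda>(x, s'). q (fst x) (snd x) s') z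
      * ((a (fst z) - \<gamma> * Hpol a (snd z)) * (b (fst z) - \<gamma> * Hpol b (snd z))))
     \<in> borel_measurable (M \<Otimes>\<^sub>M Sm)"
    using q_measurable measurable_policy_avg[OF am] measurable_policy_avg[OF bm] am bm
    by measurable
  then have "(\<lambda>(x, s'). Q x s' * (td_feature a x s' * td_feature b x s')) \<in> borel_measurable (M \<Otimes>\<^sub>M Sm)"
    by (simp add: td_feature_def case_prod_beta')
  then show ?thesis unfolding td_gram_def[abs_def]
    by (rule sigma_finite_measure.borel_measurable_lebesgue_integral[OF sigma_finite_S])
qed

lemma integrable_d_td_gram:
  assumes a: "square_integrable a" and b: "square_integrable b"
  shows "integrable M (\<lambda>x. d x * td_gram a b x)"
proof -
  interpret finite_measure M using emeasure_space_finite by (intro finite_measureI) simp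
  have "integrable M (\<lambda>x. p1max * (2 * (a x)\<^sup>2 + 2 * (b x)\<^sup>2 + 2 * p2max * (sq_integral a + sq_integral b)))"
    using a b by (simp add: square_integrable_def)
  then show ?thesis
  proof (rule Bochner_Integration.integrable_bound)
    show "(\<lambda>x. d x * td_gram a b x) \<in> borel_measurable M"
      using d_measurable measurable_td_gram[OF a b] by simp
    from d_bounds show "AE x in M. norm (d x * td_gram a b x)
        \<le> norm (p1max * (2 * (a x)\<^sup>2 + 2 * (b x)\<^sup>2 + 2 * p2max * (sq_integral a + sq_integral b)))"
    proof (rule AE_mp, intro AE_I2 impI)
      fix x assume x: "x \<in> space M" and dx: "pmin \<le> d x \<and> d x \<le> p1max"
      have "\<bar>d x * td_gram a b x\<bar>
          \<le> p1max * (2 * (a x)\<^sup>2 + 2 * (b x)\<^sup>2 + 2 * p2max * (sq_integral a + sq_integral b))"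
        unfolding abs_mult using dx d_nonneg[OF x] abs_td_gram_le[OF x a b] by (intro mult_mono) auto
      then show "norm (d x * td_gram a b x)
          \<le> norm (p1max * (2 * (a x)\<^sup>2 + 2 * (b x)\<^sup>2 + 2 * p2max * (sq_integral a + sq_integral b)))"
        by simp
    qed
  qed
qed

lemma kernel_td_comb_sq:
  fixes psi :: "nat \<Rightarrow> 's \<times> 'a \<Rightarrow> real"
  assumes x: "x \<in> space M" and psi: "\<And>j. j < J \<Longrightarrow> square_integrable (psi j)"
  shows "integrable Sm (\<lambda>s'. Q x s' * (\<Sum>i<J. v i * td_feature (psi i) x s')\<^sup>2)"
    and "(\<integral>s'. Q x s' * (\<Sum>i<J. v i * td_feature (psi i) x s')\<^sup>2 \<partial>Sm)
      = quad_form J (\<lambda>i j. td_gram (psi i) (psi j) x) v"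
proof -
  let ?K = "\<lambda>i j s'. Q x s' * (td_feature (psi i) x s' * td_feature (psi j) x s')"
  have eq: "Q x s' * (\<Sum>i<J. v i * td_feature (psi i) x s')\<^sup>2 = quad_form J (\<lambda>i j. ?K i j s') v" for s'
    by (simp add: quad_form_cmult quad_form_rank_one)
  have "\<And>i j. i < J \<Longrightarrow> j < J \<Longrightarrow> integrable Sm (?K i j)"
    using psi by (intro integrable_kernel_td_product[OF x]) auto
  note K = quad_form_integral[of J Sm ?K v, OF this]
  show "integrable Sm (\<lambda>s'. Q x s' * (\<Sum>i<J. v i * td_feature (psi i) x s')\<^sup>2)"
    unfolding eq by (rule K(1))
  show "(\<integral>s'. Q x s' * (\<Sum>i<J. v i * td_feature (psi i) x s')\<^sup>2 \<partial>Sm)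
      = quad_form J (\<lambda>i j. td_gram (psi i) (psi j) x) v"
    unfolding eq td_gram_def by (rule K(2)[symmetric])
qed

lemma kernel_mean_td_comb:
  fixes psi :: "nat \<Rightarrow> 's \<times> 'a \<Rightarrow> real"
  assumes x: "x \<in> space M" and psi: "\<And>j. j < J \<Longrightarrow> square_integrable (psi j)"
  shows "(\<integral>s'. Q x s' * (\<Sum>i<J. v i * td_feature (psi i) x s') \<partial>Sm)
    = (\<Sum>j<J. v j * psi j x) - \<gamma> * Ppol (\<lambda>y. \<Sum>j<J. v j * psi j y) x"
proof -
  have int: "integrable Sm (\<lambda>s'. v i * (psi i x * Q x s' - \<gamma> * (Q x s' * Hpol (psi i) s')))"
    if "i < J" for i
    using Q_integrable[OF x] kernel_policy_avg_sq(1)[OF x psi[OF that]] by simp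
  have "(\<integral>s'. Q x s' * (\<Sum>i<J. v i * td_feature (psi i) x s') \<partial>Sm)
      = (\<integral>s'. (\<Sum>i<J. v i * (psi i x * Q x s' - \<gamma> * (Q x s' * Hpol (psi i) s'))) \<partial>Sm)"
    by (simp add: td_feature_def sum_distrib_left algebra_simps)
  also have "\<dots> = (\<Sum>i<J. v i * (psi i x - \<gamma> * Ppol (psi i) x))"
    using int Q_integrable[OF x] Q_total[OF x] kernel_policy_avg_sq(1)[OF x psi]
    by (simp add: Bochner_Integration.integral_sum transition_op_def)
  also have "\<dots> = (\<Sum>j<J. v j * psi j x) - \<gamma> * (\<Sum>i<J. v i * Ppol (psi i) x)"
    by (simp add: sum_subtractf sum_distrib_left algebra_simps)
  also have "(\<Sum>i<J. v i * Ppol (psi i) x) = Ppol (\<lambda>y. \<Sum>j<J. v j * psi j y) x"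
    using psi by (intro transition_op_sum[OF x, symmetric]) auto
  finally show ?thesis .
qed

lemma jensen_td_comb:
  fixes psi :: "nat \<Rightarrow> 's \<times> 'a \<Rightarrow> real"
  assumes x: "x \<in> space M" and psi: "\<And>j. j < J \<Longrightarrow> square_integrable (psi j)"
  shows "((\<Sum>j<J. v j * psi j x) - \<gamma> * Ppol (\<lambda>y. \<Sum>j<J. v j * psi j y) x)\<^sup>2
    \<le> quad_form J (\<lambda>i j. td_gram (psi i) (psi j) x) v"
proof -
  let ?F = "\<lambda>s'. \<Sum>i<J. v i * td_feature (psi i) x s'"
  have "?F \<in> borel_measurable Sm"
    using psi by (intro borel_measurable_sum borel_measurable_times borel_measurable_const
        measurable_td_feature) (auto simp: square_integrable_def)
  then have "ennreal ((\<integral>s'. Q x s' * ?F s' \<partial>Sm)\<^sup>2) \<le> (\<integral>\<^sup>+s'. ennreal (Q x s' * (?F s')\<^sup>2) \<partial>Sm)"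
    by (rule jensen_square_density[OF q_density[OF x]])
  also have "\<dots> = ennreal (\<integral>s'. Q x s' * (?F s')\<^sup>2 \<partial>Sm)"
    using kernel_td_comb_sq(1)[OF x psi] Q_nonneg[OF x]
    by (intro nn_integral_eq_integral) (auto intro!: AE_I2)
  finally have "(\<integral>s'. Q x s' * ?F s' \<partial>Sm)\<^sup>2 \<le> (\<integral>s'. Q x s' * (?F s')\<^sup>2 \<partial>Sm)"
    using Q_nonneg[OF x] by (subst (asm) ennreal_le_iff) (auto intro!: integral_nonneg_AE AE_I2)
  then show ?thesis
    by (simp only: kernel_mean_td_comb[OF x psi] kernel_td_comb_sq(2)[OF x psi])
qed

lemma e_J_quad_form:
  assumes psi: "\<And>j. j < J \<Longrightarrow> square_integrable (psi j)"
  shows "integrable M (\<lambda>x. d x * quad_form J (\<lambda>i j. td_gram (psi i) (psi j) x) v)"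
    and "quad_form J (\<lambda>i j. Exp3 Sm Am q d (\<lambda>x s'. kappa Am pol \<gamma> psi i x s' * kappa Am pol \<gamma> psi j x s')) v
      = (\<integral>x. d x * quad_form J (\<lambda>i j. td_gram (psi i) (psi j) x) v \<partial>M)"
proof -
  let ?K = "\<lambda>i j x. d x * td_gram (psi i) (psi j) x"
  have "\<And>i j. i < J \<Longrightarrow> j < J \<Longrightarrow> integrable M (?K i j)"
    using psi by (intro integrable_d_td_gram) auto
  note K = quad_form_integral[of J M ?K v, OF this]
  show "integrable M (\<lambda>x. d x * quad_form J (\<lambda>i j. td_gram (psi i) (psi j) x) v)"
    using K(1) by (simp add: quad_form_cmult)
  have "Exp3 Sm Am q d (\<lambda>x s'. kappa Am pol \<gamma> psi i x s' * kappa Am pol \<gamma> psi j x s')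
      = (\<integral>x. ?K i j x \<partial>M)" for i j
    by (simp add: Exp3_def td_gram_def kappa_eq_td_feature)
  then show "quad_form J (\<lambda>i j. Exp3 Sm Am q d (\<lambda>x s'. kappa Am pol \<gamma> psi i x s' * kappa Am pol \<gamma> psi j x s')) v
      = (\<integral>x. d x * quad_form J (\<lambda>i j. td_gram (psi i) (psi j) x) v \<partial>M)"
    using K(2) by (simp add: quad_form_cmult)
qed

lemma omega_J_quad_form:
  assumes psi: "\<And>j. j < J \<Longrightarrow> square_integrable (psi j)"
  shows "quad_form J (\<lambda>i j. \<integral>x. d x * psi i x * psi j x \<partial>M) v
    = (\<integral>x. d x * (\<Sum>j<J. v j * psi j x)\<^sup>2 \<partial>M)"
proof -
  have "\<And>i j. i < J \<Longrightarrow> j < J \<Longrightarrow> integrable M (\<lambda>x. d x * psi i x * psi j x)"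
    using psi by (intro integrable_d_mult_prod) auto
  from quad_form_integral(2)[of J M "\<lambda>i j x. d x * psi i x * psi j x" v, OF this]
  show ?thesis
    by (simp add: mult.assoc quad_form_cmult quad_form_rank_one)
qed

lemma td_quad_form_lower_bound:
  assumes psi: "\<And>j. j < J \<Longrightarrow> square_integrable (psi j)"
  shows "pmin * (1 - \<gamma>)\<^sup>2 / (2 * (pmin + p2max)) * quad_form J (\<lambda>i j. \<integral>x. d x * psi i x * psi j x \<partial>M) v
    \<le> quad_form J (\<lambda>i j. Exp3 Sm Am q d (\<lambda>x s'. kappa Am pol \<gamma> psi i x s' * kappa Am pol \<gamma> psi j x s')) v"
proof -
  define f where "f = (\<lambda>y. \<Sum>j<J. v j * psi j y)"
  have f: "square_integrable f"
    unfolding f_def using psi by (intro square_integrable_sum) auto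
  have res: "square_integrable (\<lambda>y. f y - \<gamma> * Ppol f y)"
    using square_integrable_add_scaled[OF f square_integrable_transition_op[OF f], of "- \<gamma>"] by simp
  have jensen: "(\<integral>x. d x * (f x - \<gamma> * Ppol f x)\<^sup>2 \<partial>M)
      \<le> (\<integral>x. d x * quad_form J (\<lambda>i j. td_gram (psi i) (psi j) x) v \<partial>M)"
    using integrable_d_mult_sq[OF res] e_J_quad_form(1)[OF psi]
      jensen_td_comb[OF _ psi] d_nonneg
    by (intro integral_mono) (auto simp: f_def intro: mult_left_mono)
  have "pmin * (1 - \<gamma>)\<^sup>2 * quad_form J (\<lambda>i j. \<integral>x. d x * psi i x * psi j x \<partial>M) v
      = pmin * (1 - \<gamma>)\<^sup>2 * (\<integral>x. d x * (f x)\<^sup>2 \<partial>M)"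
    by (simp only: omega_J_quad_form[OF psi] f_def)
  also have "\<dots> \<le> 2 * (pmin + p2max) * (\<integral>x. d x * (f x - \<gamma> * Ppol f x)\<^sup>2 \<partial>M)"
    by (rule td_residual_lower_bound[OF f])
  also have "\<dots> \<le> 2 * (pmin + p2max) * (\<integral>x. d x * quad_form J (\<lambda>i j. td_gram (psi i) (psi j) x) v \<partial>M)"
    using jensen pmin_pos p2max_nonneg by (intro mult_left_mono) auto
  also have "\<dots> = 2 * (pmin + p2max)
      * quad_form J (\<lambda>i j. Exp3 Sm Am q d (\<lambda>x s'. kappa Am pol \<gamma> psi i x s' * kappa Am pol \<gamma> psi j x s')) v"
    by (simp only: e_J_quad_form(2)[OF psi])
  finally show ?thesis
    using pmin_pos p2max_nonneg by (simp add: pos_divide_le_eq mult.commute)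
qed

lemma e_J_lower_bound:
  assumes J: "J \<ge> 1" and psi: "\<And>j. j < J \<Longrightarrow> square_integrable (psi j)"
  shows "pmin * (1 - \<gamma>)\<^sup>2 / (2 * (pmin + p2max)) * omega_J Sm Am d J psi \<le> e_J Sm Am q d pol \<gamma> J psi"
    and "0 \<le> omega_J Sm Am d J psi"
proof -
  have symA: "\<forall>i<J. \<forall>j<J. Exp3 Sm Am q d (\<lambda>x s'. kappa Am pol \<gamma> psi i x s' * kappa Am pol \<gamma> psi j x s')
      = Exp3 Sm Am q d (\<lambda>x s'. kappa Am pol \<gamma> psi j x s' * kappa Am pol \<gamma> psi i x s')"
    by (simp add: mult.commute)
  have symB: "\<forall>i<J. \<forall>j<J. (\<integral>x. d x * psi i x * psi j x \<partial>M) = (\<integral>x. d x * psi j x * psi i x \<partial>M)"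
    by (simp add: ac_simps)
  show "pmin * (1 - \<gamma>)\<^sup>2 / (2 * (pmin + p2max)) * omega_J Sm Am d J psi \<le> e_J Sm Am q d pol \<gamma> J psi"
    unfolding omega_J_def e_J_def using pmin_pos p2max_nonneg
    by (intro lambda_min_scaled_mono[OF J symA symB] td_quad_form_lower_bound[OF psi]) auto
  show "0 \<le> omega_J Sm Am d J psi"
    unfolding omega_J_def
    by (intro lambda_min_nonneg[OF J symB]) (simp add: omega_J_quad_form[OF psi] d_nonneg)
qed

end

lemma stationary_density_bounds:
  assumes stat: "\<forall>t. AE x in SAM Sm Am. marg Sm Am nu0 q pb t x = d x" and T: "T \<ge> 1"
    and bounds: "\<forall>x\<in>space (SAM Sm Am). pmin \<le> dbar Sm Am nu0 q pb T x \<and> dbar Sm Am nu0 q pb T x \<le> p1max"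
  shows "AE x in SAM Sm Am. pmin \<le> d x \<and> d x \<le> p1max"
proof -
  from stat have "AE x in SAM Sm Am. \<forall>t. marg Sm Am nu0 q pb t x = d x"
    by (simp add: AE_all_countable)
  then show ?thesis
  proof (rule AE_mp, intro AE_I2 impI)
    fix x assume x: "x \<in> space (SAM Sm Am)" and "\<forall>t. marg Sm Am nu0 q pb t x = d x"
    then have "dbar Sm Am nu0 q pb T x = d x" using T by (simp add: dbar_def)
    with bounds x show "pmin \<le> d x \<and> d x \<le> p1max" by metis
  qed
qed

lemma lower_bound_constant:
  fixes m pmin p1max p2max e w :: real
  assumes pmin: "0 < pmin" and p2max: "0 \<le> p2max" and "pmin \<le> p1max" and "pmin * m \<le> 1"
    and "0 \<le> e" and "0 \<le> w"
  shows "m / 4 * (pmin\<^sup>2 / max p1max p2max) * e * w \<le> pmin * e / (2 * (pmin + p2max)) * w"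
proof -
  let ?P = "max p1max p2max"
  have P: "0 < ?P" and "pmin + p2max \<le> 2 * ?P" using assms by auto
  have "m / 4 * (pmin\<^sup>2 / ?P) = (pmin * m) * pmin / (4 * ?P)"
    by (simp add: power2_eq_square)
  also have "\<dots> \<le> 1 * pmin / (4 * ?P)"
    using assms P by (intro divide_right_mono mult_right_mono) auto
  also have "\<dots> = pmin / (4 * ?P)" by simp
  also have "\<dots> \<le> pmin / (2 * (pmin + p2max))"
    using pmin p2max \<open>pmin + p2max \<le> 2 * ?P\<close> by (intro divide_left_mono) auto
  finally have "m / 4 * (pmin\<^sup>2 / ?P) * e * w \<le> pmin / (2 * (pmin + p2max)) * e * w"
    using assms by (intro mult_right_mono) auto
  then show ?thesis by simp
qed

theorem lemma4:
  fixes Sm :: "'s measure" and Am :: "'a measure"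
  assumes "sigma_finite_measure Sm" and "sigma_finite_measure Am"
  shows "\<exists>c>0. \<forall>(q :: 's \<Rightarrow> 'a \<Rightarrow> 's \<Rightarrow> real) (pol :: 's \<Rightarrow> 'a \<Rightarrow> real)
      (pb :: 's \<Rightarrow> 'a \<Rightarrow> real) (nu0 :: 's \<Rightarrow> real) (d :: 's \<times> 'a \<Rightarrow> real)
      (\<gamma> :: real) (T :: nat) (N :: nat) (pmin :: real) (p1max :: real) (p2max :: real).
    ( \<comment> \<open>discount factor, sample sizes\<close>
      0 \<le> \<gamma> \<and> \<gamma> < 1 \<and> N \<ge> 1 \<and> T \<ge> 1
      \<comment> \<open>transition density q(s'|s,a) = q s a s'\<close>
    \<and> (\<lambda>(x, s'). q (fst x) (snd x) s') \<in> borel_measurable (SAM Sm Am \<Otimes>\<^sub>M Sm)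
    \<and> (\<forall>x\<in>space (SAM Sm Am). (\<forall>s'\<in>space Sm. q (fst x) (snd x) s' \<ge> 0)
          \<and> integrable Sm (q (fst x) (snd x)) \<and> (\<integral>s'. q (fst x) (snd x) s' \<partial>Sm) = 1)
      \<comment> \<open>target policy pi(a|s) = pol s a and behaviour policy pb(a|s) = pb s a\<close>
    \<and> (\<lambda>x. pol (fst x) (snd x)) \<in> borel_measurable (SAM Sm Am)
    \<and> (\<lambda>x. pb (fst x) (snd x)) \<in> borel_measurable (SAM Sm Am)
    \<and> (\<forall>s\<in>space Sm. (\<forall>a\<in>space Am. pol s a \<ge> 0 \<and> pb s a \<ge> 0)
          \<and> integrable Am (pol s) \<and> (\<integral>a. pol s a \<partial>Am) = 1
          \<and> integrable Am (pb s) \<and> (\<integral>a. pb s a \<partial>Am) = 1)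
      \<comment> \<open>initial state density\<close>
    \<and> nu0 \<in> borel_measurable Sm \<and> (\<forall>s\<in>space Sm. nu0 s \<ge> 0)
    \<and> integrable Sm nu0 \<and> (\<integral>s. nu0 s \<partial>Sm) = 1
      \<comment> \<open>strict stationarity of (S_t,A_t) under pb with stationary density d\<close>
    \<and> d \<in> borel_measurable (SAM Sm Am) \<and> (\<forall>x\<in>space (SAM Sm Am). d x \<ge> 0)
    \<and> integrable (SAM Sm Am) d \<and> (\<integral>x. d x \<partial>SAM Sm Am) = 1
    \<and> (\<forall>t. AE x in SAM Sm Am. marg Sm Am nu0 q pb t x = d x)
      \<comment> \<open>exponential beta-mixing\<close>
    \<and> exp_beta_mixing Sm Am q pb d
      \<comment> \<open>density bounds\<close>
    \<and> 0 < pmin \<and> 0 < p1max \<and> 0 < p2max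
    \<and> (\<forall>x\<in>space (SAM Sm Am). pmin \<le> dbar Sm Am nu0 q pb T x \<and> dbar Sm Am nu0 q pb T x \<le> p1max)
    \<and> (\<forall>s\<in>space Sm. AE a in Am. pb s a = 0 \<longrightarrow> pol s a = 0)
    \<and> (\<forall>x\<in>space (SAM Sm Am). \<forall>s'\<in>space Sm. \<forall>a'\<in>space Am.
          q (fst x) (snd x) s' * pol s' a' \<le> p2max))
    \<longrightarrow> (\<forall>J\<ge>1. \<forall>psi :: nat \<Rightarrow> 's \<times> 'a \<Rightarrow> real.
          (\<forall>j<J. psi j \<in> borel_measurable (SAM Sm Am)
                 \<and> integrable (SAM Sm Am) (\<lambda>x. (psi j x)\<^sup>2))
          \<longrightarrow> e_J Sm Am q d pol \<gamma> J psi
              \<ge> c * (pmin\<^sup>2 / max p1max p2max) * (1 - \<gamma>)\<^sup>2 * omega_J Sm Am d J psi)"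
proof -
  define m where "m = measure (SAM Sm Am) (space (SAM Sm Am))"
  \<comment> \<open>measure is 0 on spaces of infinite measure; under the hypotheses 0 < m < \<infinity>\<close>
  define c where "c = (if 0 < m then m / 4 else 1)"
  show ?thesis
  proof (intro exI[of _ c] conjI allI impI, goal_cases)
    case 1
    show ?case by (simp add: c_def)
  next
    case (2 q pol pb nu0 d \<gamma> T N pmin p1max p2max J psi)
    have d_bounds: "AE x in SAM Sm Am. pmin \<le> d x \<and> d x \<le> p1max"
      using 2(1) by (elim conjE) (rule stationary_density_bounds; assumption)
    interpret policy_evaluation Sm Am q pol p2max d \<gamma> pmin p1max
      unfolding policy_evaluation_def policy_kernel_def policy_evaluation_axioms_def
      using assms 2(1) d_bounds by (simp add: prob_density_def)
    have psi: "\<And>j. j < J \<Longrightarrow> square_integrable (psi j)"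
      using 2(3) by (simp add: square_integrable_def)
    have "c * (pmin\<^sup>2 / max p1max p2max) * (1 - \<gamma>)\<^sup>2 * omega_J Sm Am d J psi
        \<le> pmin * (1 - \<gamma>)\<^sup>2 / (2 * (pmin + p2max)) * omega_J Sm Am d J psi"
      using lower_bound_constant[OF pmin_pos p2max_nonneg pmin_le_p1max pmin_measure_space_le
          _ e_J_lower_bound(2)[OF 2(2) psi]] measure_space_pos
      by (simp add: c_def m_def)
    also have "\<dots> \<le> e_J Sm Am q d pol \<gamma> J psi"
      by (rule e_J_lower_bound(1)[OF 2(2) psi])
    finally show ?case .
  qed
qed

end
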